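(* Let $\mathbb F$ be algebraically closed and $A(s),B(s)\in\mathbb F[s]^{p\times q}$ pencils, with ranks $\rho_1,\rho_2$, $\rho=\min\{\rho_1,\rho_2\}$, homogeneous invariant factors $\phi_1\mid\cdots\mid\phi_{\rho_1}$ of $A(s)$ and $\psi_1\mid\cdots\mid\psi_{\rho_2}$ of $B(s)$, column minimal indices $c_1\ge\dots\ge c_{q-\rho_1}$ of $A$ and $d_1\ge\dots\ge d_{q-\rho_2}$ of $B$, row minimal indices $u_1\ge\dots\ge u_{p-\rho_1}$ of $A$ and $v_1\ge\dots\ge v_{p-\rho_2}$ of $B$. Let $(r_1,\dots),(s_1,\dots),(r'_1,\dots),(s'_1,\dots)$ be the conjugate partitions of $(c_i),(d_i),(u_i),(v_i)$, $r_0=q-\rho_1$, $s_0=q-\rho_2$, $r'_0=p-\rho_1$, $s'_0=p-\rho_2$, $\mathbf r=(r_0,r_1,\dots)$, $\mathbf s=(s_0,s_1,\dots)$, $\mathbf r'=(r'_0,r'_1,\dots)$, $\mathbf s'=(s'_0,s'_1,\dots)$. Assume $\mathbf r\ne\mathbf s$, $\mathbf r'=\mathbf s'$, and $$G\le\sum_{i=1}^\rho\min\{r_i,s_i\}+\max\{e,e'\},$$ where $x=\min\{i: r_i\ne s_i\}$, $e=\min\{i\ge x-1: s_{i+1}\ge r_{i+1}\}$, $e'=\min\{i\ge x-1: r_{i+1}\ge s_{i+1}\}$, $G=\rho-1-\sum_{i=1}^{\rho-1}\deg\gcd(\phi_{i+1},\psi_{i+1})-\sum_{i=1}^{\rho}r'_i$.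 Consider the conditions (D$\phi$): $\phi_j\mid\psi_j$ for $1\le j\le\rho$; (D$\psi$): $\psi_j\mid\phi_j$ for $1\le j\le\rho$. Then: 1. If $e>e'$: (a) for $i\in\{x,\dots,e\}$, $-x-1\le s_i-r_i\le-1$, and if $s_i-r_i=-x-1$ then (D$\phi$) holds; (b) for $i>e$, $-x\le s_i-r_i\le e+1$, and if $s_i-r_i=e+1$ then (D$\psi$) holds. 2. If $e'>e$: (a) for $i\in\{x,\dots,e'\}$, $-x-1\le r_i-s_i\le-1$, and if $r_i-s_i=-x-1$ then (D$\psi$) holds; (b) for $i>e'$, $-x\le r_i-s_i\le e'+1$, and if $r_i-s_i=e'+1$ then (D$\phi$) holds.
   Context: A pencil $A(s)=A_0+sA_1$ has rank equal to its rank over $\mathbb F(s)$. Homogeneous invariant factors are the invariant factors (homogeneous polynomials in $\mathbb F[s,t]$) of $tA_0+sA_1$, with conventions $\phi_i=1$ for $i<1$, $\phi_i=0$ for $i>\rho_1$ (similarly $\psi_i$). Column (row) minimal indices are the indices $k$ of the blocks $L_k(s)\in\mathbb F[s]^{k\times(k+1)}$ ($s$ on the diagonal, $1$ on superdiagonal), resp. $L_k(s)^T$, in the Kronecker canonical form, $q-\rho$ (resp. $p-\rho$) of them counting zeros. Conjugate of $(a_1,\dots,a_n)$ nonincreasing nonnegative: $(\bar a_1,\bar a_2,\dots)$, $\bar a_k=\#\{i:a_i\ge k\}$. *)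

theory Defs
  imports "HOL-Computational_Algebra.Polynomial_Factorial"
          "Jordan_Normal_Form.Determinant"
          "Jordan_Normal_Form.DL_Submatrix"
begin

text \<open>A pencil A(s) = A0 + s A1 is represented by the pair (A0, A1) of constant matrices.\<close>

type_synonym 'a pencil = "'a mat \<times> 'a mat"

definition is_pencil :: "nat \<Rightarrow> nat \<Rightarrow> 'a pencil \<Rightarrow> bool" where
  "is_pencil p q A \<longleftrightarrow> fst A \<in> carrier_mat p q \<and> snd A \<in> carrier_mat p q"

definition pencil_poly :: "'a::comm_ring_1 pencil \<Rightarrow> 'a poly mat" where
  "pencil_poly A = mat (dim_row (fst A)) (dim_col (fst A))
     (\<lambda>(i,j). [: fst A $$ (i,j), snd A $$ (i,j) :])"

text \<open>The homogeneous matrix t A0 + s A1 over F[s,t], where F[s,t] is represented as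
  (F[s])[t]: the outer polynomial variable is t, the inner one is s.\<close>
definition hom_pencil :: "'a::comm_ring_1 pencil \<Rightarrow> 'a poly poly mat" where
  "hom_pencil A = mat (dim_row (fst A)) (dim_col (fst A))
     (\<lambda>(i,j). [: [:0, snd A $$ (i,j):], [: fst A $$ (i,j) :] :])"

definition minors :: "'b::comm_ring_1 mat \<Rightarrow> nat \<Rightarrow> 'b set" where
  "minors M k = {det (submatrix M I J) | I J. I \<subseteq> {..<dim_row M} \<and> J \<subseteq> {..<dim_col M}
                    \<and> card I = k \<and> card J = k}"

definition pencil_rank :: "'a::comm_ring_1 pencil \<Rightarrow> nat" where
  "pencil_rank A = Max {k. \<exists>m \<in> minors (pencil_poly A) k. m \<noteq> 0}"

definition det_divisor :: "'b::{comm_ring_1,factorial_semiring_gcd} mat \<Rightarrow> nat \<Rightarrow> 'b" where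
  "det_divisor M k = Gcd (minors M k)"

text \<open>Homogeneous invariant factors phi_k of t A0 + s A1, with phi_k = 1 for k < 1 and
  phi_k = 0 for k > rank.\<close>
definition hom_inv_factor ::
  "'a::{field_gcd} pencil \<Rightarrow> nat \<Rightarrow> 'a poly poly" where
  "hom_inv_factor A k =
     (if k < 1 then 1
      else if k > pencil_rank A then 0
      else det_divisor (hom_pencil A) k div det_divisor (hom_pencil A) (k - 1))"

definition tdeg :: "'a::zero poly poly \<Rightarrow> nat" where
  "tdeg f = Max (insert 0 {i + degree (coeff f i) | i. coeff f i \<noteq> 0})"

definition diag_pencil :: "'a::zero pencil \<Rightarrow> 'a pencil \<Rightarrow> 'a pencil" where
  "diag_pencil A B =
    (four_block_mat (fst A) (0\<^sub>m (dim_row (fst A)) (dim_col (fst B)))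
                    (0\<^sub>m (dim_row (fst B)) (dim_col (fst A))) (fst B),
     four_block_mat (snd A) (0\<^sub>m (dim_row (snd A)) (dim_col (snd B)))
                    (0\<^sub>m (dim_row (snd B)) (dim_col (snd A))) (snd B))"

text \<open>L_k(s): k x (k+1), s on the diagonal, 1 on the superdiagonal.\<close>
definition L_block :: "nat \<Rightarrow> 'a::{zero,one} pencil" where
  "L_block k = (mat k (k+1) (\<lambda>(i,j). if j = i + 1 then 1 else 0),
                mat k (k+1) (\<lambda>(i,j). if j = i then 1 else 0))"

definition LT_block :: "nat \<Rightarrow> 'a::{zero,one} pencil" where
  "LT_block k = (transpose_mat (fst (L_block k)), transpose_mat (snd (L_block k)))"

definition regular_pencil :: "'a::comm_ring_1 pencil \<Rightarrow> bool" where
  "regular_pencil R \<longleftrightarrow> (\<exists>n. is_pencil n n R) \<and> det (pencil_poly R) \<noteq> 0"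

text \<open>c (column minimal indices) and u (row minimal indices) are the minimal indices of the
  p x q pencil A: A is strictly equivalent to its Kronecker canonical form
  diag(L_{c_1},...,L_{c_m}, L_{u_1}^T, ..., L_{u_n}^T, regular part).\<close>
definition kcf_minimal_indices ::
  "nat \<Rightarrow> nat \<Rightarrow> 'a::field pencil \<Rightarrow> nat list \<Rightarrow> nat list \<Rightarrow> bool" where
  "kcf_minimal_indices p q A c u \<longleftrightarrow>
     (\<exists>P Q R. P \<in> carrier_mat p p \<and> invertible_mat P \<and>
              Q \<in> carrier_mat q q \<and> invertible_mat Q \<and> regular_pencil R \<and>
              (P * fst A * Q, P * snd A * Q) =
                foldr diag_pencil (map L_block c @ map LT_block u) R)"

definition conj_part :: "nat list \<Rightarrow> nat \<Rightarrow> nat" where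
  "conj_part a k = length (filter (\<lambda>y. k \<le> y) a)"

end

theory Submission
  imports Defs "Jordan_Normal_Form.Char_Poly"
begin

(*
  Bring A into Kronecker form, with blocks L_c, L_u^T and an n x n regular part R.  Then
  rank A = sum c + sum u + n, and the rho-th determinantal divisor of t A0 + s A1 divides both
  t^N det (t R0 + s R1) and s^N det (t R0 + s R1), where N = sum c + sum u; as t and s are
  coprime it divides the latter, whose total degree is at most n.  Hence sum c + sum u + sum_i deg phi_i <= rho.  Moreover
  sum_(i<rho) deg gcd (phi_(i+1), psi_(i+1)) <= sum_i deg phi_i, strictly unless (D phi) holds,
  so G >= sum c - 1, and G >= sum c when (D phi) fails; symmetrically for B.  Also r' = s'
  forces rho1 = rho2.

  The rest is combinatorics of the conjugate partitions.  Writing sum r_i = sum min (r_i, s_i) +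
  sum (r_i - s_i)^+, the bound on G says that the total excess of r over s is at most e + 1 (at
  most e when (D phi) fails).  If r_x > s_x, then r exceeds s on the whole run x <= i <= e, each
  index there contributing at least 1 to that excess; what is left bounds each single difference.
*)

section \<open>Minors and determinantal divisors\<close>

lemma assoc_mult_mat_outer:
  assumes A: "A \<in> carrier_mat n1 n2" and B: "B \<in> carrier_mat n2 n3" and C: "C \<in> carrier_mat n3 n4"
    and D: "D \<in> carrier_mat n4 n5" and E: "E \<in> carrier_mat n5 n6"
  shows "A * (B * C * D) * E = (A * B) * C * (D * E)"
proof -
  have "A * (B * C * D) = A * (B * (C * D))"
    using assoc_mult_mat[OF B C D] by simp
  also have "\<dots> = A * B * C * D"
    using assoc_mult_mat[OF A B mult_carrier_mat[OF C D]] assoc_mult_mat[OF mult_carrier_mat[OF A B] C D]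
    by simp
  finally show ?thesis
    using assoc_mult_mat[OF mult_carrier_mat[OF mult_carrier_mat[OF A B] C] D E] by simp
qed

lemma invertible_matE:
  assumes P: "P \<in> carrier_mat n n" and "invertible_mat P"
  obtains P' where "P' \<in> carrier_mat n n" "P * P' = 1\<^sub>m n" "P' * P = 1\<^sub>m n"
proof -
  obtain P' where PP': "P * P' = 1\<^sub>m n" and P'P: "P' * P = 1\<^sub>m (dim_row P')"
    using assms unfolding invertible_mat_def inverts_mat_def by auto
  have "dim_col P' = n"
    using arg_cong[OF PP', of dim_col] by simp
  moreover have "dim_row P' = n"
    using arg_cong[OF P'P, of dim_col] P by simp
  ultimately show ?thesis
    using that PP' P'P by auto
qed

definition block_diag_mat :: "'b::zero mat \<Rightarrow> 'b mat \<Rightarrow> 'b mat" where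
  "block_diag_mat A B = four_block_mat A (0\<^sub>m (dim_row A) (dim_col B)) (0\<^sub>m (dim_row B) (dim_col A)) B"

lemma block_diag_mat_carrier:
  "A \<in> carrier_mat r1 c1 \<Longrightarrow> B \<in> carrier_mat r2 c2 \<Longrightarrow>
    block_diag_mat A B \<in> carrier_mat (r1 + r2) (c1 + c2)"
  by (auto simp: block_diag_mat_def)

lemma block_diag_mat_mult:
  fixes A1 :: "'b::semiring_0 mat"
  assumes "A1 \<in> carrier_mat r1 k1" "A2 \<in> carrier_mat r2 k2" "B1 \<in> carrier_mat k1 c1" "B2 \<in> carrier_mat k2 c2"
  shows "block_diag_mat A1 A2 * block_diag_mat B1 B2 = block_diag_mat (A1 * B1) (A2 * B2)"
  unfolding block_diag_mat_def using assms by (subst mult_four_block_mat) auto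

lemma det_block_diag_mat:
  fixes A :: "'b::idom mat"
  assumes "A \<in> carrier_mat n n" "B \<in> carrier_mat m m"
  shows "det (block_diag_mat A B) = det A * det B"
  unfolding block_diag_mat_def using assms by (intro det_four_block_mat_upper_right_zero) auto

lemma det_lower_triangular_const_diag:
  assumes "A \<in> carrier_mat n n" and "\<And>i j. i < j \<Longrightarrow> j < n \<Longrightarrow> A $$ (i, j) = 0"
    and "\<And>i. i < n \<Longrightarrow> A $$ (i, i) = z"
  shows "det A = z ^ n"
  using assms by (simp add: det_lower_triangular[of n] prod_list_diag_prod)

definition select_mat :: "(nat \<Rightarrow> nat) \<Rightarrow> nat \<Rightarrow> nat \<Rightarrow> 'b::comm_ring_1 mat" where
  "select_mat f k m = mat k m (\<lambda>(i, l). if l = f i then 1 else 0)"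

lemma select_mat_carrier [simp]: "select_mat f k m \<in> carrier_mat k m"
  by (simp add: select_mat_def)

lemma select_mat_mult:
  assumes Z: "Z \<in> carrier_mat m n" and f: "\<And>i. i < k \<Longrightarrow> f i < m"
  shows "select_mat f k m * Z = mat k n (\<lambda>(i, j). Z $$ (f i, j))"
  by (rule eq_matI) (use Z f in \<open>auto simp: select_mat_def scalar_prod_def if_distrib if_distribR sum.delta' cong: if_cong\<close>)

lemma mult_transpose_select_mat:
  assumes Z: "Z \<in> carrier_mat r m" and g: "\<And>j. j < k \<Longrightarrow> g j < m"
  shows "Z * transpose_mat (select_mat g k m) = mat r k (\<lambda>(i, j). Z $$ (i, g j))"
  by (rule eq_matI) (use Z g in \<open>auto simp: select_mat_def scalar_prod_def if_distrib if_distribR sum.delta' cong: if_cong\<close>)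

lemma pick_less: "I \<subseteq> {..<m} \<Longrightarrow> i < card I \<Longrightarrow> pick I i < m"
  using pick_in_set by blast

lemma submatrix_eq_select_mat:
  assumes M: "M \<in> carrier_mat m n" and I: "I \<subseteq> {..<m}" and J: "J \<subseteq> {..<n}"
  shows "submatrix M I J =
    select_mat (pick I) (card I) m * M * transpose_mat (select_mat (pick J) (card J) n)"
proof -
  have rows: "{i. i < dim_row M \<and> i \<in> I} = I" and cols: "{j. j < dim_col M \<and> j \<in> J} = J"
    using M I J by auto
  have "select_mat (pick I) (card I) m * M = mat (card I) n (\<lambda>(i, j). M $$ (pick I i, j))"
    by (rule select_mat_mult[OF M pick_less[OF I]])
  moreover have "mat (card I) n (\<lambda>(i, j). M $$ (pick I i, j)) * transpose_mat (select_mat (pick J) (card J) n)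
      = mat (card I) (card J) (\<lambda>(i, j). M $$ (pick I i, pick J j))"
    by (subst mult_transpose_select_mat[OF _ pick_less[OF J]]) (use pick_less[OF J] in \<open>auto intro!: eq_matI\<close>)
  ultimately show ?thesis
    by (auto intro!: eq_matI simp: dim_submatrix rows cols submatrix_index)
qed

lemma dvd_det_select_mat_mult:
  assumes Y: "Y \<in> carrier_mat n k"
    and dvd: "\<And>S. S \<subseteq> {..<n} \<Longrightarrow> card S = k \<Longrightarrow> d dvd det (select_mat (pick S) k n * Y)"
    and f: "\<And>i. i < k \<Longrightarrow> f i < n"
  shows "d dvd det (select_mat f k n * Y)"
proof (cases "inj_on f {0..<k}")
  case False
  then obtain i j where ij: "f i = f j" "i \<noteq> j" "i < k" "j < k"
    unfolding inj_on_def by auto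
  have "det (mat k k (\<lambda>(i, j). Y $$ (f i, j))) = 0"
    by (rule det_identical_rows[OF _ ij(2-4)]) (use ij Y in \<open>auto intro!: eq_vecI\<close>)
  then show ?thesis
    using select_mat_mult[OF Y f] Y by simp
next
  case True
  \<comment> \<open>\<open>f = pick S \<circ> g\<close> for the permutation \<open>g\<close> giving the rank of \<open>f i\<close> in \<open>S\<close>\<close>
  define S where "S = f ` {0..<k}"
  have S: "S \<subseteq> {..<n}" and card_S: "card S = k" and fin_S: "finite S"
    using f card_image[OF True] unfolding S_def by auto
  define g where "g i = (if i < k then card {a \<in> S. a < f i} else i)" for i
  have f_in: "i < k \<Longrightarrow> f i \<in> S" for i
    unfolding S_def by auto
  have pick_g: "i < k \<Longrightarrow> pick S (g i) = f i" for i
    using pick_card_in_set[OF f_in] unfolding g_def by simp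
  have g_less: "i < k \<Longrightarrow> g i < k" for i
    using psubset_card_mono[OF fin_S, of "{a \<in> S. a < f i}"] f_in card_S unfolding g_def by auto
  have "inj_on g {0..<k}"
    using True pick_g by (metis atLeastLessThan_iff inj_on_def)
  then have g: "g permutes {0..<k}"
    by (rule inj_on_nat_permutes) (use g_less in \<open>auto simp: g_def\<close>)
  define Z where "Z = select_mat (pick S) k n * Y"
  have Z: "Z = mat k k (\<lambda>(i, j). Y $$ (pick S i, j))"
    unfolding Z_def using select_mat_mult[OF Y, of k "pick S"] pick_less[OF S] card_S by simp
  have "select_mat f k n * Y = mat k k (\<lambda>(i, j). Z $$ (g i, j))"
    using select_mat_mult[OF Y f] by (auto intro!: eq_matI simp: Z g_less pick_g)
  then have "det (select_mat f k n * Y) = signof g * det Z"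
    using det_permute_rows[OF _ g, of Z] Z by simp
  moreover have "d dvd det Z"
    unfolding Z_def by (rule dvd[OF S card_S])
  ultimately show ?thesis by simp
qed

lemma dvd_det_mult_if_dvd_row_minors:
  assumes X: "X \<in> carrier_mat k n" and Y: "Y \<in> carrier_mat n k"
    and dvd: "\<And>S. S \<subseteq> {..<n} \<Longrightarrow> card S = k \<Longrightarrow> d dvd det (select_mat (pick S) k n * Y)"
  shows "d dvd det (X * Y)"
proof -
  let ?F = "{f. (\<forall>i\<in>{0..<k}. f i \<in> {0..<n}) \<and> (\<forall>i. i \<notin> {0..<k} \<longrightarrow> f i = i)}"
  have "det (X * Y) = (\<Sum>f\<in>?F. det (mat\<^sub>r k k (\<lambda>i. X $$ (i, f i) \<cdot>\<^sub>v row Y (f i))))"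
    unfolding mat_mul_finsum_alt[OF X Y] by (rule det_linear_rows_sum) (use X Y in auto)
  also have "d dvd \<dots>"
  proof (rule dvd_sum)
    fix f assume "f \<in> ?F"
    then have f: "\<And>i. i < k \<Longrightarrow> f i < n" by auto
    have "mat\<^sub>r k k (\<lambda>i. row Y (f i)) = select_mat f k n * Y"
      using select_mat_mult[OF Y f] Y f by (auto intro!: eq_matI)
    then have "d dvd det (mat\<^sub>r k k (\<lambda>i. row Y (f i)))"
      using dvd_det_select_mat_mult[OF Y dvd f] by simp
    moreover have "det (mat\<^sub>r k k (\<lambda>i. X $$ (i, f i) \<cdot>\<^sub>v row Y (f i))) =
        prod (\<lambda>i. X $$ (i, f i)) {0..<k} * det (mat\<^sub>r k k (\<lambda>i. row Y (f i)))"
      by (rule det_rows_mul) (use Y f in auto)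
    ultimately show "d dvd det (mat\<^sub>r k k (\<lambda>i. X $$ (i, f i) \<cdot>\<^sub>v row Y (f i)))"
      by simp
  qed
  finally show ?thesis .
qed

lemma dvd_det_mult_mult_if_dvd_minors:
  assumes M: "M \<in> carrier_mat m n" and V: "V \<in> carrier_mat k m" and W: "W \<in> carrier_mat n k"
    and dvd: "\<And>x. x \<in> minors M k \<Longrightarrow> d dvd x"
  shows "d dvd det (V * M * W)"
proof -
  have "d dvd det (V * (M * W))"
  proof (rule dvd_det_mult_if_dvd_row_minors[OF V])
    fix S assume S: "S \<subseteq> {..<m}" "card S = k"
    define R :: "'a mat" where "R = select_mat (pick S) k m"
    have R: "R \<in> carrier_mat k m"
      unfolding R_def by simp
    then have RM: "R * M \<in> carrier_mat k n"
      using M by simp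
    have "d dvd det (transpose_mat W * transpose_mat (R * M))"
    proof (rule dvd_det_mult_if_dvd_row_minors)
      fix T assume T: "T \<subseteq> {..<n}" "card T = k"
      define C :: "'a mat" where "C = select_mat (pick T) k n"
      have "C * transpose_mat (R * M) = transpose_mat (R * M * transpose_mat C)"
        using transpose_mult[OF RM, of "transpose_mat C" k] by (simp add: C_def)
      moreover have "R * M * transpose_mat C = submatrix M S T"
        unfolding R_def C_def using submatrix_eq_select_mat[OF M S(1) T(1)] S T by simp
      moreover have "det (submatrix M S T) \<in> minors M k"
        unfolding minors_def using M S T by auto
      moreover have "R * M * transpose_mat C \<in> carrier_mat k k"
        using RM by (simp add: C_def)
      ultimately show "d dvd det (select_mat (pick T) k n * transpose_mat (R * M))"
        using dvd by (simp add: C_def det_transpose)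
    qed (use W RM in auto)
    also have "transpose_mat W * transpose_mat (R * M) = transpose_mat (R * M * W)"
      using RM W by (simp add: transpose_mult)
    also have "det \<dots> = det (R * (M * W))"
      using R M W by (simp add: assoc_mult_mat det_transpose[of _ k])
    finally show "d dvd det (select_mat (pick S) k m * (M * W))"
      unfolding R_def .
  qed (use M W in auto)
  then show ?thesis
    using V M W by (simp add: assoc_mult_mat)
qed

lemma minor_eq_det_mult:
  assumes M: "M \<in> carrier_mat m n" and x: "x \<in> minors M k"
  obtains V W where "V \<in> carrier_mat k m" "W \<in> carrier_mat n k" "x = det (V * M * W)"
proof -
  obtain I J where x: "x = det (submatrix M I J)" and IJ: "I \<subseteq> {..<m}" "J \<subseteq> {..<n}"
    and card: "card I = k" "card J = k"
    using x M unfolding minors_def by auto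
  show ?thesis
    by (rule that[of "select_mat (pick I) k m" "transpose_mat (select_mat (pick J) k n)"])
      (use submatrix_eq_select_mat[OF M IJ] x card in auto)
qed

lemma det_divisor_dvd_det_mult:
  assumes "M \<in> carrier_mat m n" "V \<in> carrier_mat k m" "W \<in> carrier_mat n k"
  shows "det_divisor M k dvd det (V * M * W)"
  unfolding det_divisor_def by (rule dvd_det_mult_mult_if_dvd_minors[OF assms Gcd_dvd])

lemma minors_eq_empty:
  assumes "M \<in> carrier_mat r c" and "r < k"
  shows "minors M k = {}"
proof -
  have "\<not> (I \<subseteq> {..<r} \<and> card I = k)" for I
    using card_mono[OF finite_lessThan, of I r] assms(2) by auto
  then show ?thesis
    unfolding minors_def using assms(1) by auto
qed

lemma minor_eq_0_if_inner_dim_less: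
  assumes X: "X \<in> carrier_mat m r" and Y: "Y \<in> carrier_mat r n" and k: "r < k"
    and x: "x \<in> minors (X * Y) k"
  shows "x = 0"
proof -
  have XY: "X * Y \<in> carrier_mat m n"
    using X Y by simp
  obtain V W where V: "V \<in> carrier_mat k m" and W: "W \<in> carrier_mat n k"
    and "x = det (V * (X * Y) * W)"
    using minor_eq_det_mult[OF XY x] .
  then have "x = det ((V * X) * Y * W)"
    using X Y by (simp add: assoc_mult_mat)
  moreover have "0 dvd det ((V * X) * Y * W)"
    by (rule dvd_det_mult_mult_if_dvd_minors[OF Y _ W]) (use V X minors_eq_empty[OF Y k] in auto)
  ultimately show ?thesis
    by simp
qed

lemma nonzero_minor_if_det_mult_nonzero:
  assumes "M \<in> carrier_mat m n" "V \<in> carrier_mat k m" "W \<in> carrier_mat n k"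
    and "det (V * M * W) \<noteq> 0"
  shows "\<exists>x \<in> minors M k. x \<noteq> 0"
  using dvd_det_mult_mult_if_dvd_minors[OF assms(1-3), of 0] assms(4) by auto

lemma minors_0: "minors M 0 = {1}"
proof -
  have "I \<subseteq> {..<r} \<Longrightarrow> card I = 0 \<longleftrightarrow> I = {}" for I :: "nat set" and r
    using finite_subset by fastforce
  then have "minors M 0 = {det (submatrix M {} {})}"
    unfolding minors_def by blast
  also have "det (submatrix M {} {}) = 1"
    by (simp add: det_def dim_submatrix)
  finally show ?thesis .
qed

lemma det_divisor_0 [simp]: "det_divisor M 0 = 1"
  unfolding det_divisor_def minors_0 by simp

lemma det_divisor_dvd_Suc: "det_divisor M k dvd det_divisor M (Suc k)"
  unfolding det_divisor_def
proof (rule Gcd_greatest)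
  define m n where "m = dim_row M" and "n = dim_col M"
  have M: "M \<in> carrier_mat m n"
    unfolding m_def n_def by simp
  fix x assume "x \<in> minors M (Suc k)"
  then obtain V W where V: "V \<in> carrier_mat (Suc k) m" and W: "W \<in> carrier_mat n (Suc k)"
    and x: "x = det (V * M * W)"
    using minor_eq_det_mult[OF M] by blast
  define Z where "Z = V * M * W"
  have Z: "Z \<in> carrier_mat (Suc k) (Suc k)"
    unfolding Z_def using V M W by simp
  have "Gcd (minors M k) dvd Z $$ (0, j) * cofactor Z 0 j" if j: "j < Suc k" for j
  proof -
    define R :: "'a mat" where "R = select_mat Suc k (Suc k)"
    define C :: "'a mat" where "C = transpose_mat (select_mat (\<lambda>l. if l < j then l else Suc l) k (Suc k))"
    have R: "R \<in> carrier_mat k (Suc k)" and C: "C \<in> carrier_mat (Suc k) k"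
      unfolding R_def C_def by auto
    have "R * Z = mat k (Suc k) (\<lambda>(i, l). Z $$ (Suc i, l))"
      unfolding R_def by (rule select_mat_mult[OF Z]) simp
    then have "R * Z * C = mat k k (\<lambda>(i, l). Z $$ (Suc i, if l < j then l else Suc l))"
      unfolding C_def by (subst mult_transpose_select_mat) (auto intro!: eq_matI)
    also have "\<dots> = mat_delete Z 0 j"
      using Z j by (auto simp: mat_delete_def intro!: eq_matI)
    finally have "mat_delete Z 0 j = R * Z * C" ..
    also have "\<dots> = (R * V) * M * (W * C)"
      unfolding Z_def by (rule assoc_mult_mat_outer[OF R V M W C])
    finally have "mat_delete Z 0 j = (R * V) * M * (W * C)" .
    moreover have "Gcd (minors M k) dvd det ((R * V) * M * (W * C))"
      using det_divisor_dvd_det_mult[OF M, of "R * V" k "W * C"] R V W C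
      unfolding det_divisor_def by simp
    ultimately show ?thesis
      unfolding cofactor_def by simp
  qed
  then have "Gcd (minors M k) dvd (\<Sum>j<Suc k. Z $$ (0, j) * cofactor Z 0 j)"
    by (intro dvd_sum) simp
  then show "Gcd (minors M k) dvd x"
    using laplace_expansion_row[OF Z, of 0] unfolding x Z_def[symmetric] by simp
qed

lemma det_divisor_mono: "k \<le> l \<Longrightarrow> det_divisor M k dvd det_divisor M l"
proof (induction rule: dec_induct)
  case (step l)
  then show ?case
    using det_divisor_dvd_Suc[of M l] dvd_trans by blast
qed simp

section \<open>Total degree of bivariate polynomials\<close>

text \<open>\<open>subst_st f\<close> is \<open>f(s t, t)\<close>; its degree in \<open>t\<close> is the total degree of \<open>f(s, t)\<close>.\<close>

definition subst_st :: "'a::comm_ring_1 poly poly \<Rightarrow> 'a poly poly" where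
  "subst_st f = poly (map_poly (\<lambda>c. poly (map_poly (\<lambda>a. [:[:a:]:]) c) [:0, [:0, 1:]:]) f) [:0, 1:]"

lemma comm_ring_hom_subst_st: "comm_ring_hom (subst_st :: 'a::comm_ring_1 poly poly \<Rightarrow> _)"
proof -
  interpret const: map_poly_comm_ring_hom "\<lambda>a::'a. [:[:a:]:]"
    by unfold_locales (simp_all add: one_pCons)
  define st :: "'a poly \<Rightarrow> 'a poly poly" where "st c = poly (map_poly (\<lambda>a. [:[:a:]:]) c) [:0, [:0, 1:]:]" for c
  have "comm_ring_hom st"
    by unfold_locales (simp_all add: st_def const.hom_add const.hom_mult)
  then interpret st: map_poly_comm_ring_hom st
    by (simp add: map_poly_comm_ring_hom_def)
  show ?thesis
    by unfold_locales (simp_all add: subst_st_def st_def[symmetric] st.hom_add st.hom_mult)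
qed

interpretation subst_st: comm_ring_hom "subst_st :: 'a::comm_ring_1 poly poly \<Rightarrow> _"
  by (rule comm_ring_hom_subst_st)

lemma coeff_coeff_subst_st:
  "coeff (coeff (subst_st f) m) j = (if j \<le> m then coeff (coeff f (m - j)) j else 0)"
proof -
  have coeff_st: "coeff (poly (map_poly (\<lambda>a. [:[:a:]:]) c) [:0, [:0, 1:]:]) j = monom (coeff c j) j"
    for c :: "'a poly" and j
  proof (induction c arbitrary: j)
    case (pCons a c)
    then show ?case
      by (cases j) (simp_all add: map_poly_pCons monom_0 monom_Suc)
  qed simp
  show ?thesis
  proof (induction f arbitrary: m)
    case (pCons c f)
    then show ?case
      by (cases m) (auto simp: subst_st_def map_poly_pCons coeff_st coeff_monom Suc_diff_le le_Suc_eq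
          split: nat.split)
  qed (simp add: subst_st_def)
qed

lemma finite_tdeg_set: "finite {i + degree (coeff f i) | i. coeff f i \<noteq> 0}"
proof -
  have "{i + degree (coeff f i) | i. coeff f i \<noteq> 0} \<subseteq> (\<lambda>i. i + degree (coeff f i)) ` {..degree f}"
    using le_degree by fastforce
  then show ?thesis
    by (rule finite_subset) simp
qed

lemma tdeg_ge: "coeff f i \<noteq> 0 \<Longrightarrow> i + degree (coeff f i) \<le> tdeg f"
  unfolding tdeg_def by (rule Max_ge) (use finite_tdeg_set in auto)

lemma tdeg_le: "(\<And>i. coeff f i \<noteq> 0 \<Longrightarrow> i + degree (coeff f i) \<le> d) \<Longrightarrow> tdeg f \<le> d"
  unfolding tdeg_def by (rule Max.boundedI) (use finite_tdeg_set in auto)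

lemma tdeg_attained:
  assumes "f \<noteq> 0"
  obtains i where "coeff f i \<noteq> 0" "tdeg f = i + degree (coeff f i)"
proof -
  have ne: "{i + degree (coeff f i) | i. coeff f i \<noteq> 0} \<noteq> {}"
    using assms by (auto simp: poly_eq_iff)
  have "tdeg f \<in> {i + degree (coeff f i) | i. coeff f i \<noteq> 0}"
    using Max_in[OF finite_tdeg_set ne] Max_insert[OF finite_tdeg_set ne, of 0] unfolding tdeg_def by simp
  then show ?thesis
    using that by blast
qed

lemma degree_subst_st: "degree (subst_st f) = tdeg f"
proof (rule antisym)
  have "coeff (subst_st f) m = 0" if m: "tdeg f < m" for m
  proof (rule poly_eqI)
    fix j
    have "coeff (coeff f (m - j)) j = 0" if "j \<le> m"
      using tdeg_ge[of f "m - j"] le_degree[of "coeff f (m - j)" j] m that by fastforce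
    then show "coeff (coeff (subst_st f) m) j = coeff 0 j"
      by (simp add: coeff_coeff_subst_st)
  qed
  then show "degree (subst_st f) \<le> tdeg f"
    by (meson degree_le)
next
  show "tdeg f \<le> degree (subst_st f)"
  proof (cases "f = 0")
    case False
    then obtain i where i: "coeff f i \<noteq> 0" and t: "tdeg f = i + degree (coeff f i)"
      by (rule tdeg_attained)
    have "coeff (coeff (subst_st f) (tdeg f)) (degree (coeff f i)) = lead_coeff (coeff f i)"
      by (simp add: coeff_coeff_subst_st t)
    then have "coeff (subst_st f) (tdeg f) \<noteq> 0"
      using i by auto
    then show ?thesis
      by (rule le_degree)
  qed (simp add: tdeg_def)
qed

lemma subst_st_eq_0_iff: "subst_st f = 0 \<longleftrightarrow> f = 0"
proof
  assume "subst_st f = 0"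
  then have "coeff (coeff f i) j = 0" for i j
    using coeff_coeff_subst_st[of f "i + j" j] by simp
  then show "f = 0"
    by (simp add: poly_eq_iff)
qed (simp add: subst_st.hom_zero)

lemma tdeg_mult:
  fixes f g :: "'a::idom poly poly"
  assumes "f \<noteq> 0" and "g \<noteq> 0"
  shows "tdeg (f * g) = tdeg f + tdeg g"
  using degree_mult_eq[of "subst_st f" "subst_st g"] assms
  by (simp add: subst_st.hom_mult[symmetric] degree_subst_st subst_st_eq_0_iff)

lemma tdeg_1 [simp]: "tdeg (1 :: 'a::comm_ring_1 poly poly) = 0"
  using degree_subst_st[of 1] by (simp add: subst_st.hom_one)

lemma tdeg_dvd_le:
  fixes f g :: "'a::idom poly poly"
  assumes "f dvd g" and "g \<noteq> 0"
  shows "tdeg f \<le> tdeg g"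
  using assms tdeg_mult by (elim dvdE) fastforce

lemma is_unit_if_tdeg_eq_0:
  fixes f :: "'a::field poly poly"
  assumes f: "f \<noteq> 0" and t: "tdeg f = 0"
  shows "is_unit f"
proof -
  have "degree f = 0"
    using tdeg_ge[of f "degree f"] f t by simp
  then have f_const: "f = [:coeff f 0:]" and "coeff f 0 \<noteq> 0"
    using f by (auto elim: degree_eq_zeroE)
  moreover have "degree (coeff f 0) = 0"
    using tdeg_ge[of f 0] t \<open>coeff f 0 \<noteq> 0\<close> by simp
  ultimately show ?thesis
    by (metis is_unit_const_poly_iff is_unit_iff_degree)
qed

lemma dvd_if_tdeg_eq:
  fixes f g :: "'a::field poly poly"
  assumes "f dvd g" and g: "g \<noteq> 0" and "tdeg f = tdeg g"
  shows "g dvd f"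
proof -
  obtain h where h: "g = f * h"
    using assms(1) by (elim dvdE)
  then have "f \<noteq> 0" "h \<noteq> 0"
    using g by auto
  then have "is_unit h"
    using tdeg_mult[of f h] h assms(3) by (intro is_unit_if_tdeg_eq_0) auto
  then show ?thesis
    using h by (simp add: mult_unit_dvd_iff')
qed

lemma tdeg_det_le:
  fixes M :: "'a::comm_ring_1 poly poly mat"
  assumes "M \<in> carrier_mat n n" and "\<And>i j. i < n \<Longrightarrow> j < n \<Longrightarrow> tdeg (M $$ (i, j)) \<le> 1"
  shows "tdeg (det M) \<le> n"
proof -
  have "tdeg (det M) = degree (det (map_mat subst_st M))"
    by (simp add: subst_st.hom_det degree_subst_st)
  also have "\<dots> \<le> 1 * n"
    by (rule degree_det_le) (use assms in \<open>auto simp: degree_subst_st\<close>)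
  finally show ?thesis
    by simp
qed

lemma coprime_t_s: "coprime ([:0, 1:] :: 'a::field poly poly) [:[:0, 1:]:]"
proof (rule coprimeI)
  fix c :: "'a poly poly"
  assume "c dvd [:0, 1:]" and "c dvd [:[:0, 1:]:]"
  then obtain f g where t: "[:0, 1:] = c * f" and s: "[:[:0, 1:]:] = c * g"
    by (auto elim!: dvdE)
  have "c \<noteq> 0" "g \<noteq> 0"
    using s by auto
  then have "degree c = 0"
    using degree_mult_eq[of c g] s[symmetric] by simp
  then obtain c0 where c0: "c = [:c0:]"
    by (elim degree_eq_zeroE) simp
  have "c0 * coeff f 1 = 1"
    using arg_cong[OF t, of "\<lambda>p. coeff p 1"] by (simp add: c0)
  then show "is_unit c"
    unfolding c0 is_unit_const_poly_iff by (rule dvdI[OF sym])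
qed

lemma sum_tdeg_gcd_le:
  fixes f g :: "nat \<Rightarrow> 'a::field_gcd poly poly"
  assumes nz: "\<And>k. 1 \<le> k \<Longrightarrow> k \<le> \<rho> \<Longrightarrow> f k \<noteq> 0"
  shows "(\<Sum>i = 1..\<rho> - 1. tdeg (gcd (f (i + 1)) (g (i + 1))))
      + of_bool (\<not> (\<forall>j. 1 \<le> j \<and> j \<le> \<rho> \<longrightarrow> f j dvd g j)) \<le> (\<Sum>i = 1..\<rho>. tdeg (f i))"
proof (cases "\<rho> = 0")
  case False
  then have \<rho>: "1 \<le> \<rho>"
    by simp
  have split: "(\<Sum>i = 1..\<rho>. tdeg (f i)) = tdeg (f 1) + (\<Sum>i = 1..\<rho> - 1. tdeg (f (i + 1)))"
    using \<rho> sum.atLeast_Suc_atMost[of 1 \<rho> "\<lambda>i. tdeg (f i)"]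
      sum.shift_bounds_cl_Suc_ivl[of "\<lambda>i. tdeg (f i)" 1 "\<rho> - 1"] by simp
  have le: "tdeg (gcd (f (i + 1)) (g (i + 1))) \<le> tdeg (f (i + 1))" if "i \<in> {1..\<rho> - 1}" for i
  proof (rule tdeg_dvd_le)
    show "f (i + 1) \<noteq> 0"
      using that \<rho> by (intro nz) auto
  qed simp
  then have sum_le: "(\<Sum>i = 1..\<rho> - 1. tdeg (gcd (f (i + 1)) (g (i + 1)))) \<le> (\<Sum>i = 1..\<rho> - 1. tdeg (f (i + 1)))"
    by (rule sum_mono)
  show ?thesis
  proof (cases "\<forall>j. 1 \<le> j \<and> j \<le> \<rho> \<longrightarrow> f j dvd g j")
    case True
    then show ?thesis
      using split sum_le by simp
  next
    case False
    then obtain j where j: "1 \<le> j" "j \<le> \<rho>" and nd: "\<not> f j dvd g j"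
      by blast
    show ?thesis
    proof (cases "j = 1")
      case True
      then have "tdeg (f 1) \<noteq> 0"
        using nd nz[of 1] j is_unit_if_tdeg_eq_0[of "f 1"] by auto
      then show ?thesis
        using False split sum_le by simp
    next
      case False
      have "tdeg (gcd (f j) (g j)) \<noteq> tdeg (f j)"
        using dvd_if_tdeg_eq[OF gcd_dvd1 nz[OF j]] nd by (meson dvd_trans gcd_dvd2)
      then have "tdeg (gcd (f (j - 1 + 1)) (g (j - 1 + 1))) < tdeg (f (j - 1 + 1))"
        using le[of "j - 1"] j False by fastforce
      then have "(\<Sum>i = 1..\<rho> - 1. tdeg (gcd (f (i + 1)) (g (i + 1)))) < (\<Sum>i = 1..\<rho> - 1. tdeg (f (i + 1)))"
        using j False by (intro sum_strict_mono_ex1[OF _ ballI[OF le]] bexI[of _ "j - 1"]) auto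
      then show ?thesis
        using split \<open>\<not> (\<forall>j. 1 \<le> j \<and> j \<le> \<rho> \<longrightarrow> f j dvd g j)\<close> by simp
    qed
  qed
qed simp

section \<open>Conjugate partitions\<close>

lemma conj_part_Cons: "conj_part (y # c) i = of_bool (i \<le> y) + conj_part c i"
  by (simp add: conj_part_def)

lemma conj_part_pos_le:
  assumes "0 < conj_part c i"
  shows "i \<le> sum_list c"
proof -
  obtain y where "y \<in> set c" "i \<le> y"
    using assms unfolding conj_part_def by (auto simp: filter_empty_conv)
  then show ?thesis
    using member_le_sum_list[of y c] by simp
qed

lemma sum_conj_part: "(\<Sum>i = 1..K. conj_part c i) = (\<Sum>y \<leftarrow> c. min y K)"
proof (induction c)
  case (Cons y c)
  have "(\<Sum>i = 1..K. of_bool (i \<le> y)) = card ({1..K} \<inter> {..y})"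
    by (simp add: of_bool_def sum.If_cases Int_def)
  also have "{1..K} \<inter> {..y} = {1..min y K}"
    by auto
  finally show ?case
    using Cons by (simp add: conj_part_Cons sum.distrib)
qed (simp add: conj_part_def)

lemma sum_conj_part_le: "(\<Sum>i = 1..K. conj_part c i) \<le> sum_list c"
  unfolding sum_conj_part by (induction c) auto

lemma sum_conj_part_eq:
  assumes "sum_list c \<le> K"
  shows "(\<Sum>i = 1..K. conj_part c i) = sum_list c"
proof -
  have "\<forall>y \<in> set c. y \<le> K"
    using assms member_le_sum_list order_trans by blast
  then show ?thesis
    unfolding sum_conj_part by (induction c) auto
qed

lemma member_plus_card_le_sum:
  fixes f :: "'a \<Rightarrow> nat"
  assumes A: "finite A" and i: "i \<in> A" and T: "T \<subseteq> A" and pos: "\<And>j. j \<in> T \<Longrightarrow> 0 < f j"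
  shows "f i + card (T - {i}) \<le> sum f A"
proof -
  have fin: "finite T"
    using A T finite_subset by blast
  have "card (T - {i}) \<le> sum f (T - {i})"
    using sum_mono[of "T - {i}" "\<lambda>_. 1" f] pos by fastforce
  also have "f i + sum f (T - {i}) = sum f (insert i T)"
    using fin by (simp add: sum.insert_remove)
  also have "\<dots> \<le> sum f A"
    using A i T by (intro sum_mono2) auto
  finally show ?thesis
    by simp
qed

lemma sum_excess_le:
  fixes r s :: "'a \<Rightarrow> nat" and G m :: int
  assumes "G \<le> (\<Sum>i\<in>A. int (min (r i) (s i))) + m" and "int (\<Sum>i\<in>A. r i) - 1 + of_bool b \<le> G"
  shows "int (\<Sum>i\<in>A. r i - s i) + of_bool b \<le> m + 1"
proof -
  \<comment> \<open>With truncated subtraction, \<open>r i - s i\<close> is the positive part of the difference.\<close>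
  have "(\<Sum>i\<in>A. r i) = (\<Sum>i\<in>A. min (r i) (s i)) + (\<Sum>i\<in>A. r i - s i)"
    unfolding sum.distrib[symmetric] by (rule sum.cong) auto
  then show ?thesis
    using assms by (simp add: of_nat_sum)
qed

lemma excess_run:
  fixes r s :: "nat \<Rightarrow> nat"
  assumes supp_r: "\<forall>i > \<rho>. r i = 0" and r0: "r 0 = s 0" and rx: "s x < r x"
  defines "j0 \<equiv> (LEAST j. x \<le> j \<and> r j \<le> s j)"
  shows "1 \<le> x" and "x < j0" and "\<And>j. x \<le> j \<Longrightarrow> j < j0 \<Longrightarrow> s j < r j"
    and "(LEAST j. x \<le> j \<and> s j \<le> r j) = x"
proof -
  show "1 \<le> x"
    using rx r0 by (cases x) auto
  have "x \<le> max x (Suc \<rho>) \<and> r (max x (Suc \<rho>)) \<le> s (max x (Suc \<rho>))"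
    using supp_r by simp
  then have "x \<le> j0" "r j0 \<le> s j0"
    unfolding j0_def by (metis (mono_tags, lifting) LeastI)+
  then show "x < j0"
    using rx by (cases "j0 = x") auto
  show "s j < r j" if "x \<le> j" "j < j0" for j
    using not_less_Least[of j "\<lambda>j. x \<le> j \<and> r j \<le> s j"] that unfolding j0_def by auto
  show "(LEAST j. x \<le> j \<and> s j \<le> r j) = x"
    using rx by (intro Least_equality) auto
qed

lemma run_excess_bounds:
  fixes r s :: "nat \<Rightarrow> nat"
  assumes supp_r: "\<forall>i > \<rho>. r i = 0" and r0: "r 0 = s 0" and rx: "s x < r x"
  defines "j0 \<equiv> (LEAST j. x \<le> j \<and> r j \<le> s j)"
  assumes excess: "int (\<Sum>i = 1..\<rho>. r i - s i) + of_bool b \<le> int j0"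
  shows "\<And>i. x \<le> i \<Longrightarrow> i < j0 \<Longrightarrow> s i < r i \<and> int (r i) - int (s i) + of_bool b \<le> int x + 1"
    and "\<And>i. j0 \<le> i \<Longrightarrow> int (r i) - int (s i) + of_bool b \<le> int x"
proof -
  note run = excess_run[OF supp_r r0 rx, folded j0_def]
  have in_range: "i \<in> {1..\<rho>}" if "1 \<le> i" "s i < r i" for i
    using that supp_r by (auto simp: not_less[symmetric])
  have run_sub: "{x..<j0} \<subseteq> {1..\<rho>}"
  proof
    fix j assume "j \<in> {x..<j0}"
    then show "j \<in> {1..\<rho>}"
      using run(1) run(3)[of j] by (intro in_range) auto
  qed
  \<comment> \<open>Every index of the run other than \<open>i\<close> contributes at least \<open>1\<close> to the excess.\<close>
  have excess_i: "r i - s i + card ({x..<j0} - {i}) \<le> (\<Sum>i = 1..\<rho>. r i - s i)"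
    if "i \<in> {1..\<rho>}" for i
    using that run_sub run(3) by (intro member_plus_card_le_sum) auto
  have bound: "int (r i) - int (s i) + int (card ({x..<j0} - {i})) + of_bool b \<le> int j0"
    if "1 \<le> i" "s i < r i" for i
  proof -
    have "int (r i - s i + card ({x..<j0} - {i})) \<le> int (\<Sum>i = 1..\<rho>. r i - s i)"
      using excess_i[OF in_range[OF that]] by (simp only: of_nat_le_iff)
    then show ?thesis
      using excess that(2) by (simp add: of_nat_diff)
  qed
  show "s i < r i \<and> int (r i) - int (s i) + of_bool b \<le> int x + 1" if "x \<le> i" "i < j0" for i
    using bound[of i] run(1) run(3)[of i] that by (simp add: of_nat_diff)
  show "int (r i) - int (s i) + of_bool b \<le> int x" if "j0 \<le> i" for i
  proof (cases "s i < r i")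
    case True
    then show ?thesis
      using bound[of i] run(1,2) that by (simp add: of_nat_diff)
  qed (use run(1) in \<open>cases b; simp\<close>)
qed

lemma first_difference_bounds_if_greater:
  fixes r s :: "nat \<Rightarrow> nat" and G :: int
  assumes supp_r: "\<forall>i > \<rho>. r i = 0" and supp_s: "\<forall>i > \<rho>. s i = 0"
    and r0: "r 0 = s 0" and rx: "s x < r x"
  defines "e \<equiv> int (LEAST j. x \<le> j \<and> r j \<le> s j) - 1"
    and "e' \<equiv> int (LEAST j. x \<le> j \<and> s j \<le> r j) - 1"
  assumes G: "G \<le> (\<Sum>i = 1..\<rho>. int (min (r i) (s i))) + max e e'"
    and Gr: "int (\<Sum>i = 1..\<rho>. r i) - 1 + of_bool (\<not> Dr) \<le> G"
    and Gs: "int (\<Sum>i = 1..\<rho>. s i) - 1 + of_bool (\<not> Ds) \<le> G"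
  shows "e' < e \<and>
    (\<forall>i::nat. x \<le> i \<and> int i \<le> e \<longrightarrow>
       - int x - 1 \<le> int (s i) - int (r i) \<and> int (s i) - int (r i) \<le> -1 \<and>
       (int (s i) - int (r i) = - int x - 1 \<longrightarrow> Dr)) \<and>
    (\<forall>i::nat. int i > e \<longrightarrow>
       - int x \<le> int (s i) - int (r i) \<and> int (s i) - int (r i) \<le> e + 1 \<and>
       (int (s i) - int (r i) = e + 1 \<longrightarrow> Ds))"
proof -
  define j0 where "j0 = (LEAST j. x \<le> j \<and> r j \<le> s j)"
  note run = excess_run[OF supp_r r0 rx, folded j0_def]
  have e: "e = int j0 - 1"
    unfolding e_def j0_def ..
  moreover have "e' = int x - 1"
    unfolding e'_def run(4) ..
  ultimately have e'_e: "e' < e" and max: "max e e' = e"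
    using run(2) by auto
  have "int (\<Sum>i = 1..\<rho>. r i - s i) + of_bool (\<not> Dr) \<le> int j0"
    using sum_excess_le[OF G Gr] e max by simp
  note bounds = run_excess_bounds[OF supp_r r0 rx, folded j0_def, OF this]
  have Es: "int (\<Sum>i = 1..\<rho>. s i - r i) + of_bool (\<not> Ds) \<le> int j0"
    using sum_excess_le[where r = s and s = r and m = "max e e'", OF _ Gs] G e max by (simp add: min.commute)
  have in_run: "- int x - 1 \<le> int (s i) - int (r i) \<and> int (s i) - int (r i) \<le> -1 \<and>
       (int (s i) - int (r i) = - int x - 1 \<longrightarrow> Dr)" if "x \<le> i" "int i \<le> e" for i
    using bounds(1)[of i] that e by (cases Dr) auto
  have after_run: "- int x \<le> int (s i) - int (r i) \<and> int (s i) - int (r i) \<le> e + 1 \<and>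
       (int (s i) - int (r i) = e + 1 \<longrightarrow> Ds)" if i: "e < int i" for i
  proof -
    have "int (s i) - int (r i) \<le> int (\<Sum>i = 1..\<rho>. s i - r i)"
    proof (cases "r i < s i")
      case True
      then have "i \<in> {1..\<rho>}"
        using supp_s i e run(1,2) by (auto simp: not_less[symmetric])
      then have "s i - r i \<le> (\<Sum>i = 1..\<rho>. s i - r i)"
        by (intro member_le_sum) auto
      then show ?thesis
        using True by linarith
    next
      case False
      then have "int (s i) - int (r i) \<le> 0"
        by simp
      also have "0 \<le> int (\<Sum>i = 1..\<rho>. s i - r i)"
        by (rule of_nat_0_le_iff)
      finally show ?thesis .
    qed
    then show ?thesis
      using bounds(2)[of i] i e Es by (cases Dr; cases Ds) auto
  qed
  show ?thesis
    using e'_e in_run after_run by blast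
qed

lemma first_difference_bounds:
  fixes r s :: "nat \<Rightarrow> nat" and G :: int
  assumes supp_r: "\<forall>i > \<rho>. r i = 0" and supp_s: "\<forall>i > \<rho>. s i = 0"
    and r0: "r 0 = s 0" and rx: "r x \<noteq> s x"
  defines "e \<equiv> int (LEAST j. x \<le> j \<and> r j \<le> s j) - 1"
    and "e' \<equiv> int (LEAST j. x \<le> j \<and> s j \<le> r j) - 1"
  assumes G: "G \<le> (\<Sum>i = 1..\<rho>. int (min (r i) (s i))) + max e e'"
    and Gr: "int (\<Sum>i = 1..\<rho>. r i) - 1 + of_bool (\<not> Dr) \<le> G"
    and Gs: "int (\<Sum>i = 1..\<rho>. s i) - 1 + of_bool (\<not> Ds) \<le> G"
  shows "(e > e' \<longrightarrow>
            (\<forall>i::nat. x \<le> i \<and> int i \<le> e \<longrightarrow>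
               - int x - 1 \<le> int (s i) - int (r i) \<and> int (s i) - int (r i) \<le> -1 \<and>
               (int (s i) - int (r i) = - int x - 1 \<longrightarrow> Dr)) \<and>
            (\<forall>i::nat. int i > e \<longrightarrow>
               - int x \<le> int (s i) - int (r i) \<and> int (s i) - int (r i) \<le> e + 1 \<and>
               (int (s i) - int (r i) = e + 1 \<longrightarrow> Ds)))
       \<and> (e' > e \<longrightarrow>
            (\<forall>i::nat. x \<le> i \<and> int i \<le> e' \<longrightarrow>
               - int x - 1 \<le> int (r i) - int (s i) \<and> int (r i) - int (s i) \<le> -1 \<and>
               (int (r i) - int (s i) = - int x - 1 \<longrightarrow> Ds)) \<and>
            (\<forall>i::nat. int i > e' \<longrightarrow>
               - int x \<le> int (r i) - int (s i) \<and> int (r i) - int (s i) \<le> e' + 1 \<and>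
               (int (r i) - int (s i) = e' + 1 \<longrightarrow> Dr)))"
proof -
  from rx consider "s x < r x" | "r x < s x"
    by linarith
  then show ?thesis
  proof cases
    case 1
    show ?thesis
      using first_difference_bounds_if_greater[OF supp_r supp_s r0 1, folded e_def e'_def, OF G Gr Gs]
      by auto
  next
    case 2
    have "G \<le> (\<Sum>i = 1..\<rho>. int (min (s i) (r i))) + max e' e"
      using G by (simp add: min.commute max.commute)
    then show ?thesis
      using first_difference_bounds_if_greater[OF supp_s supp_r r0[symmetric] 2, folded e_def e'_def,
          OF _ Gs Gr] by auto
  qed
qed

lemma sum_conj_part_shifted:
  assumes "sum_list c \<le> \<rho>" and r: "\<forall>i > 0. r i = conj_part c i"
  shows "(\<Sum>i = 1..\<rho>. r i) = sum_list c" and "\<forall>i > \<rho>. r i = 0"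
proof -
  show "(\<Sum>i = 1..\<rho>. r i) = sum_list c"
    unfolding sum_conj_part_eq[OF assms(1), symmetric] using r by (intro sum.cong) auto
  show "\<forall>i > \<rho>. r i = 0"
    using conj_part_pos_le[of c] assms r by (metis gr_implies_not0 gr_zeroI le_trans not_le)
qed

section \<open>Pencils in Kronecker canonical form\<close>

definition pencil_mat :: "'c::comm_ring_1 \<Rightarrow> 'c \<Rightarrow> ('a \<Rightarrow> 'c) \<Rightarrow> 'a pencil \<Rightarrow> 'c mat" where
  "pencil_mat a b h X = mat (dim_row (fst X)) (dim_col (fst X))
     (\<lambda>(i, j). a * h (fst X $$ (i, j)) + b * h (snd X $$ (i, j)))"

lemma pencil_mat_carrier: "fst X \<in> carrier_mat r c \<Longrightarrow> pencil_mat a b h X \<in> carrier_mat r c"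
  by (auto simp: pencil_mat_def)

lemma pencil_poly_eq_pencil_mat: "pencil_poly A = pencil_mat 1 [:0, 1:] (\<lambda>x. [:x:]) A"
  by (rule eq_matI) (auto simp: pencil_poly_def pencil_mat_def)

lemma hom_pencil_eq_pencil_mat: "hom_pencil A = pencil_mat [:0, 1:] [:[:0, 1:]:] (\<lambda>x. [:[:x:]:]) A"
  by (rule eq_matI) (auto simp: hom_pencil_def pencil_mat_def)

lemma semiring_hom_const_poly: "semiring_hom (\<lambda>x::'a::comm_ring_1. [:x:])"
  and semiring_hom_const_poly_poly: "semiring_hom (\<lambda>x::'a::comm_ring_1. [:[:x:]:])"
  by unfold_locales (simp_all add: one_pCons)

lemma pencil_mat_strict_equiv:
  assumes h: "semiring_hom h"
    and P: "P \<in> carrier_mat r' r" and X0: "X0 \<in> carrier_mat r c" and X1: "X1 \<in> carrier_mat r c"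
    and Q: "Q \<in> carrier_mat c c'"
  shows "pencil_mat a b h (P * X0 * Q, P * X1 * Q) = map_mat h P * pencil_mat a b h (X0, X1) * map_mat h Q"
proof -
  interpret h: semiring_hom h by (rule h)
  have pencil_mat_pair: "pencil_mat a b h (Y0, Y1) = a \<cdot>\<^sub>m map_mat h Y0 + b \<cdot>\<^sub>m map_mat h Y1"
    if "Y0 \<in> carrier_mat m n" "Y1 \<in> carrier_mat m n" for Y0 Y1 :: "'a mat" and m n
    by (rule eq_matI) (use that in \<open>auto simp: pencil_mat_def\<close>)
  have map_PXQ: "map_mat h (P * X * Q) = map_mat h P * map_mat h X * map_mat h Q"
    if "X \<in> carrier_mat r c" for X
  proof -
    have "map_mat h (P * X * Q) = map_mat h (P * X) * map_mat h Q"
      by (rule h.mat_hom_mult[OF mult_carrier_mat[OF P that] Q])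
    also have "map_mat h (P * X) = map_mat h P * map_mat h X"
      by (rule h.mat_hom_mult[OF P that])
    finally show ?thesis .
  qed
  have "pencil_mat a b h (P * X0 * Q, P * X1 * Q)
      = a \<cdot>\<^sub>m map_mat h (P * X0 * Q) + b \<cdot>\<^sub>m map_mat h (P * X1 * Q)"
    by (rule pencil_mat_pair) (use P Q X0 X1 in auto)
  also have "\<dots> = a \<cdot>\<^sub>m (map_mat h P * map_mat h X0 * map_mat h Q)
      + b \<cdot>\<^sub>m (map_mat h P * map_mat h X1 * map_mat h Q)"
    unfolding map_PXQ[OF X0] map_PXQ[OF X1] ..
  also have "\<dots> = map_mat h P * (a \<cdot>\<^sub>m map_mat h X0 + b \<cdot>\<^sub>m map_mat h X1) * map_mat h Q"
  proof -
    let ?P = "map_mat h P" and ?Q = "map_mat h Q" and ?X0 = "map_mat h X0" and ?X1 = "map_mat h X1"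
    have P': "?P \<in> carrier_mat r' r" and Q': "?Q \<in> carrier_mat c c'"
      and X0': "?X0 \<in> carrier_mat r c" and X1': "?X1 \<in> carrier_mat r c"
      using P Q X0 X1 by auto
    have "?P * (a \<cdot>\<^sub>m ?X0 + b \<cdot>\<^sub>m ?X1) = a \<cdot>\<^sub>m (?P * ?X0) + b \<cdot>\<^sub>m (?P * ?X1)"
      using mult_add_distrib_mat[OF P', of "a \<cdot>\<^sub>m ?X0" c "b \<cdot>\<^sub>m ?X1"] X0' X1'
        mult_smult_distrib[OF P' X0'] mult_smult_distrib[OF P' X1'] by simp
    moreover have "(a \<cdot>\<^sub>m (?P * ?X0) + b \<cdot>\<^sub>m (?P * ?X1)) * ?Q
        = a \<cdot>\<^sub>m (?P * ?X0 * ?Q) + b \<cdot>\<^sub>m (?P * ?X1 * ?Q)"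
      using add_mult_distrib_mat[of "a \<cdot>\<^sub>m (?P * ?X0)" r' c "b \<cdot>\<^sub>m (?P * ?X1)" ?Q c'] P' Q' X0' X1'
        mult_smult_assoc_mat[OF mult_carrier_mat[OF P' X0'] Q']
        mult_smult_assoc_mat[OF mult_carrier_mat[OF P' X1'] Q'] by simp
    ultimately show ?thesis
      by simp
  qed
  finally show ?thesis
    using X0 X1 by (simp add: pencil_mat_pair)
qed

lemma pencil_mat_diag_pencil:
  assumes "h 0 = 0"
    and "fst X \<in> carrier_mat r1 c1" "snd X \<in> carrier_mat r1 c1"
    and "fst Y \<in> carrier_mat r2 c2" "snd Y \<in> carrier_mat r2 c2"
  shows "pencil_mat a b h (diag_pencil X Y) = block_diag_mat (pencil_mat a b h X) (pencil_mat a b h Y)"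
  by (rule eq_matI) (use assms in \<open>auto simp: pencil_mat_def diag_pencil_def block_diag_mat_def\<close>)

text \<open>Two compressed determinants are recorded because for \<open>L\<^sub>k\<close> they are \<open>a\<^sup>k\<close> and \<open>b\<^sup>k\<close>,
  which are coprime when \<open>(a, b) = (t, s)\<close>.\<close>

definition pencil_rank_witness ::
  "'c::idom \<Rightarrow> 'c \<Rightarrow> ('a \<Rightarrow> 'c) \<Rightarrow> 'a pencil \<Rightarrow> nat \<Rightarrow> 'c \<Rightarrow> 'c \<Rightarrow> bool" where
  "pencil_rank_witness a b h B k da db \<longleftrightarrow>
    (\<exists>r c. fst B \<in> carrier_mat r c \<and> snd B \<in> carrier_mat r c \<and>
     (\<exists>X Y. X \<in> carrier_mat r k \<and> Y \<in> carrier_mat k c \<and> pencil_mat a b h B = X * Y) \<and>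
     (\<forall>d \<in> {da, db}. \<exists>V W. V \<in> carrier_mat k r \<and> W \<in> carrier_mat c k \<and>
        det (V * pencil_mat a b h B * W) = d))"

lemma pencil_rank_witnessI:
  assumes "fst B \<in> carrier_mat r c" "snd B \<in> carrier_mat r c"
    and "X \<in> carrier_mat r k" "Y \<in> carrier_mat k c" "pencil_mat a b h B = X * Y"
    and "\<And>d. d \<in> {da, db} \<Longrightarrow> \<exists>V W. V \<in> carrier_mat k r \<and> W \<in> carrier_mat c k \<and>
      det (V * pencil_mat a b h B * W) = d"
  shows "pencil_rank_witness a b h B k da db"
  unfolding pencil_rank_witness_def using assms by blast

lemma pencil_rank_witnessE:
  assumes "pencil_rank_witness a b h B k da db"
  obtains r c X Y where "fst B \<in> carrier_mat r c" "snd B \<in> carrier_mat r c"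
    and "X \<in> carrier_mat r k" "Y \<in> carrier_mat k c" "pencil_mat a b h B = X * Y"
    and "\<And>d. d \<in> {da, db} \<Longrightarrow> \<exists>V W. V \<in> carrier_mat k r \<and> W \<in> carrier_mat c k \<and>
      det (V * pencil_mat a b h B * W) = d"
  using assms unfolding pencil_rank_witness_def by blast

lemma pencil_rank_witness_diag_pencil:
  assumes h: "h 0 = 0"
    and X: "pencil_rank_witness a b h X k1 da1 db1" and Y: "pencil_rank_witness a b h Y k2 da2 db2"
  shows "pencil_rank_witness a b h (diag_pencil X Y) (k1 + k2) (da1 * da2) (db1 * db2)"
proof -
  let ?LX = "pencil_mat a b h X" and ?LY = "pencil_mat a b h Y"
  obtain r1 c1 X1 Y1 where X0: "fst X \<in> carrier_mat r1 c1" "snd X \<in> carrier_mat r1 c1"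
    and X1: "X1 \<in> carrier_mat r1 k1" "Y1 \<in> carrier_mat k1 c1" "?LX = X1 * Y1"
    and dX: "\<And>d. d \<in> {da1, db1} \<Longrightarrow>
      \<exists>V W. V \<in> carrier_mat k1 r1 \<and> W \<in> carrier_mat c1 k1 \<and> det (V * ?LX * W) = d"
    using X by (elim pencil_rank_witnessE) blast
  obtain r2 c2 X2 Y2 where Y0: "fst Y \<in> carrier_mat r2 c2" "snd Y \<in> carrier_mat r2 c2"
    and X2: "X2 \<in> carrier_mat r2 k2" "Y2 \<in> carrier_mat k2 c2" "?LY = X2 * Y2"
    and dY: "\<And>d. d \<in> {da2, db2} \<Longrightarrow>
      \<exists>V W. V \<in> carrier_mat k2 r2 \<and> W \<in> carrier_mat c2 k2 \<and> det (V * ?LY * W) = d"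
    using Y by (elim pencil_rank_witnessE) blast
  have LX: "?LX \<in> carrier_mat r1 c1" and LY: "?LY \<in> carrier_mat r2 c2"
    using X0 Y0 by (auto intro: pencil_mat_carrier)
  have L: "pencil_mat a b h (diag_pencil X Y) = block_diag_mat ?LX ?LY"
    by (rule pencil_mat_diag_pencil[where h = h, OF h X0 Y0])
  have "\<exists>V W. V \<in> carrier_mat (k1 + k2) (r1 + r2) \<and> W \<in> carrier_mat (c1 + c2) (k1 + k2) \<and>
      det (V * pencil_mat a b h (diag_pencil X Y) * W) = d1 * d2"
    if d1: "d1 \<in> {da1, db1}" and d2: "d2 \<in> {da2, db2}" for d1 d2
  proof -
    obtain V1 W1 V2 W2 where V1: "V1 \<in> carrier_mat k1 r1" and W1: "W1 \<in> carrier_mat c1 k1"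
      and V2: "V2 \<in> carrier_mat k2 r2" and W2: "W2 \<in> carrier_mat c2 k2"
      and d: "det (V1 * ?LX * W1) = d1" "det (V2 * ?LY * W2) = d2"
      using dX[OF d1] dY[OF d2] by blast
    have "block_diag_mat V1 V2 * pencil_mat a b h (diag_pencil X Y) = block_diag_mat (V1 * ?LX) (V2 * ?LY)"
      unfolding L by (rule block_diag_mat_mult[OF V1 V2 LX LY])
    also have "\<dots> * block_diag_mat W1 W2 = block_diag_mat (V1 * ?LX * W1) (V2 * ?LY * W2)"
      by (rule block_diag_mat_mult) (use V1 V2 W1 W2 LX LY in auto)
    also have "det \<dots> = d1 * d2"
      using d by (subst det_block_diag_mat[of _ k1 _ k2]) (use V1 V2 W1 W2 LX LY in auto)
    finally show ?thesis
      using V1 V2 W1 W2 by (blast intro: block_diag_mat_carrier)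
  qed
  moreover have "pencil_mat a b h (diag_pencil X Y) = block_diag_mat X1 X2 * block_diag_mat Y1 Y2"
    using X1 X2 by (simp add: L block_diag_mat_mult)
  moreover have "fst (diag_pencil X Y) \<in> carrier_mat (r1 + r2) (c1 + c2)"
    "snd (diag_pencil X Y) \<in> carrier_mat (r1 + r2) (c1 + c2)"
    using X0 Y0 by (auto simp: diag_pencil_def)
  ultimately show ?thesis
    using X1 X2 by (intro pencil_rank_witnessI) (auto intro: block_diag_mat_carrier)
qed

lemma pencil_rank_witness_transpose:
  assumes "pencil_rank_witness a b h (X0, X1) k da db"
  shows "pencil_rank_witness a b h (transpose_mat X0, transpose_mat X1) k da db"
proof -
  obtain r c X Y where X0: "X0 \<in> carrier_mat r c" "X1 \<in> carrier_mat r c"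
    and XY: "X \<in> carrier_mat r k" "Y \<in> carrier_mat k c" "pencil_mat a b h (X0, X1) = X * Y"
    and compress: "\<And>d. d \<in> {da, db} \<Longrightarrow> \<exists>V W. V \<in> carrier_mat k r \<and> W \<in> carrier_mat c k \<and>
        det (V * pencil_mat a b h (X0, X1) * W) = d"
    using assms by (elim pencil_rank_witnessE) auto
  have L: "pencil_mat a b h (transpose_mat X0, transpose_mat X1) = transpose_mat (pencil_mat a b h (X0, X1))"
    using X0 by (auto simp: pencil_mat_def intro!: eq_matI)
  have LC: "pencil_mat a b h (X0, X1) \<in> carrier_mat r c"
    using X0 by (auto intro: pencil_mat_carrier)
  have "\<exists>V W. V \<in> carrier_mat k c \<and> W \<in> carrier_mat r k \<and>
      det (V * pencil_mat a b h (transpose_mat X0, transpose_mat X1) * W) = d" if d: "d \<in> {da, db}" for d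
  proof -
    obtain V W where V: "V \<in> carrier_mat k r" and W: "W \<in> carrier_mat c k"
      and "det (V * pencil_mat a b h (X0, X1) * W) = d"
      using compress[OF d] by blast
    moreover have "transpose_mat W * transpose_mat (pencil_mat a b h (X0, X1)) * transpose_mat V
        = transpose_mat (V * pencil_mat a b h (X0, X1) * W)"
    proof -
      have "transpose_mat (V * pencil_mat a b h (X0, X1) * W)
          = transpose_mat W * (transpose_mat (pencil_mat a b h (X0, X1)) * transpose_mat V)"
        using transpose_mult[OF mult_carrier_mat[OF V LC] W] transpose_mult[OF V LC] by simp
      then show ?thesis
        using assoc_mult_mat[of "transpose_mat W" k c "transpose_mat (pencil_mat a b h (X0, X1))" r
            "transpose_mat V" k] V W LC by simp
    qed
    ultimately show ?thesis
      using LC by (intro exI[of _ "transpose_mat W"] exI[of _ "transpose_mat V"])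
        (simp add: L det_transpose[of _ k])
  qed
  moreover have "pencil_mat a b h (transpose_mat X0, transpose_mat X1) = transpose_mat Y * transpose_mat X"
    using XY by (simp add: L transpose_mult)
  ultimately show ?thesis
    using X0 XY by (intro pencil_rank_witnessI[where X = "transpose_mat Y" and Y = "transpose_mat X"]) auto
qed

lemma pencil_rank_witness_L_block:
  assumes h: "semiring_hom h"
  shows "pencil_rank_witness a b h (L_block k) k (a ^ k) (b ^ k)"
proof -
  interpret h: semiring_hom h by (rule h)
  define L where "L = pencil_mat a b h (L_block k)"
  have L_def': "L = mat k (k + 1) (\<lambda>(i, j). if j = Suc i then a else if j = i then b else 0)"
    unfolding L_def by (rule eq_matI) (auto simp: pencil_mat_def L_block_def)
  have L: "L \<in> carrier_mat k (k + 1)"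
    unfolding L_def' by simp
  define Wa Wb :: "'b mat"
    where "Wa = transpose_mat (select_mat Suc k (k + 1))" and "Wb = transpose_mat (select_mat (\<lambda>j. j) k (k + 1))"
  have Wa: "Wa \<in> carrier_mat (k + 1) k" and Wb: "Wb \<in> carrier_mat (k + 1) k"
    by (simp_all add: Wa_def Wb_def)
  \<comment> \<open>Deleting the first column of \<open>L\<^sub>k\<close> leaves a lower triangular matrix with diagonal \<open>a\<close>,
    deleting the last one an upper triangular one with diagonal \<open>b\<close>.\<close>
  have "det (1\<^sub>m k * L * Wa) = a ^ k"
    using L unfolding Wa_def
    by (subst mult_transpose_select_mat) (auto simp: L_def' intro: det_lower_triangular_const_diag)
  then have "\<exists>V W. V \<in> carrier_mat k k \<and> W \<in> carrier_mat (k + 1) k \<and> det (V * L * W) = a ^ k"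
    using Wa by (intro exI[of _ "1\<^sub>m k"] exI[of _ Wa]) simp
  moreover have "det (1\<^sub>m k * L * Wb) = b ^ k"
  proof -
    have "det (1\<^sub>m k * L * Wb) = det (transpose_mat (L * Wb))"
      using L by (simp add: Wb_def det_transpose[of _ k])
    also have "\<dots> = b ^ k"
      unfolding Wb_def
      by (subst mult_transpose_select_mat[OF L]) (auto simp: L_def' intro: det_lower_triangular_const_diag)
    finally show ?thesis .
  qed
  then have "\<exists>V W. V \<in> carrier_mat k k \<and> W \<in> carrier_mat (k + 1) k \<and> det (V * L * W) = b ^ k"
    using Wb by (intro exI[of _ "1\<^sub>m k"] exI[of _ Wb]) simp
  moreover have "L = 1\<^sub>m k * L"
    using L by simp
  ultimately show ?thesis
    unfolding L_def using L
    by (intro pencil_rank_witnessI[where X = "1\<^sub>m k" and Y = L]) (auto simp: L_block_def L_def)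
qed

lemma pencil_rank_witness_LT_block:
  assumes "semiring_hom h"
  shows "pencil_rank_witness a b h (LT_block k) k (a ^ k) (b ^ k)"
  unfolding LT_block_def
  by (rule pencil_rank_witness_transpose) (simp add: pencil_rank_witness_L_block[OF assms])

lemma pencil_rank_witness_square:
  assumes "is_pencil n n R"
  shows "pencil_rank_witness a b h R n (det (pencil_mat a b h R)) (det (pencil_mat a b h R))"
proof -
  have L: "pencil_mat a b h R \<in> carrier_mat n n"
    using assms by (auto simp: is_pencil_def intro: pencil_mat_carrier)
  then have "\<exists>V W. V \<in> carrier_mat n n \<and> W \<in> carrier_mat n n \<and>
      det (V * pencil_mat a b h R * W) = det (pencil_mat a b h R)"
    by (intro exI[of _ "1\<^sub>m n"]) auto
  then show ?thesis
    using assms L unfolding is_pencil_def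
    by (intro pencil_rank_witnessI[where X = "1\<^sub>m n" and Y = "pencil_mat a b h R"]) auto
qed

lemma pencil_rank_witness_foldr_diag_pencil:
  assumes h: "h 0 = 0" and blocks: "\<And>k. pencil_rank_witness a b h (B k) k (a ^ k) (b ^ k)"
    and R: "pencil_rank_witness a b h R n da db"
  shows "pencil_rank_witness a b h (foldr diag_pencil (map B ks) R) (sum_list ks + n)
    (a ^ sum_list ks * da) (b ^ sum_list ks * db)"
proof (induction ks)
  case (Cons k ks)
  then show ?case
    using pencil_rank_witness_diag_pencil[OF h blocks Cons.IH]
    by (simp add: power_add mult.assoc add.assoc)
qed (simp add: R)

lemma pencil_rank_witness_strict_equiv:
  assumes h: "semiring_hom h" and A: "is_pencil p q A"
    and P: "P \<in> carrier_mat p p" "invertible_mat P" and Q: "Q \<in> carrier_mat q q" "invertible_mat Q"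
    and K: "pencil_rank_witness a b h (P * fst A * Q, P * snd A * Q) k da db"
  shows "pencil_rank_witness a b h A k da db"
proof -
  interpret h: semiring_hom h by (rule h)
  obtain P' where P': "P' \<in> carrier_mat p p" "P' * P = 1\<^sub>m p"
    using invertible_matE[OF P] by metis
  obtain Q' where Q': "Q' \<in> carrier_mat q q" "Q * Q' = 1\<^sub>m q"
    using invertible_matE[OF Q] by metis
  let ?L = "pencil_mat a b h A" and ?LK = "pencil_mat a b h (P * fst A * Q, P * snd A * Q)"
  have A0: "fst A \<in> carrier_mat p q" "snd A \<in> carrier_mat p q"
    using A by (auto simp: is_pencil_def)
  have L: "?L \<in> carrier_mat p q"
    by (rule pencil_mat_carrier[OF A0(1)])
  have hP: "map_mat h P \<in> carrier_mat p p" "map_mat h P' \<in> carrier_mat p p"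
    and hQ: "map_mat h Q \<in> carrier_mat q q" "map_mat h Q' \<in> carrier_mat q q"
    using P P' Q Q' by auto
  have LK: "?LK = map_mat h P * ?L * map_mat h Q"
    using pencil_mat_strict_equiv[OF h P(1) A0 Q(1)] by simp
  have "map_mat h P' * map_mat h P = 1\<^sub>m p"
    using h.mat_hom_mult[OF P'(1) P(1)] P'(2) h.mat_hom_one by simp
  moreover have "map_mat h Q * map_mat h Q' = 1\<^sub>m q"
    using h.mat_hom_mult[OF Q(1) Q'(1)] Q'(2) h.mat_hom_one by simp
  ultimately have L_eq: "?L = map_mat h P' * ?LK * map_mat h Q'"
    unfolding LK using assoc_mult_mat_outer[OF hP(2) hP(1) L hQ] L by simp
  obtain r c X Y where K0: "fst (P * fst A * Q, P * snd A * Q) \<in> carrier_mat r c"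
    and XY: "X \<in> carrier_mat r k" "Y \<in> carrier_mat k c" "?LK = X * Y"
    and compress: "\<And>d. d \<in> {da, db} \<Longrightarrow> \<exists>V W. V \<in> carrier_mat k r \<and> W \<in> carrier_mat c k \<and>
      det (V * ?LK * W) = d"
    using K by (elim pencil_rank_witnessE) blast
  have rc: "r = p" "c = q"
    using K0 P Q A0 by auto
  have X: "X \<in> carrier_mat p k" and Y: "Y \<in> carrier_mat k q"
    using XY rc by auto
  have "\<exists>V W. V \<in> carrier_mat k p \<and> W \<in> carrier_mat q k \<and> det (V * ?L * W) = d"
    if d: "d \<in> {da, db}" for d
  proof -
    obtain V W where V: "V \<in> carrier_mat k p" and W: "W \<in> carrier_mat q k" and "det (V * ?LK * W) = d"
      using compress[OF d] rc by blast
    then have "det ((V * map_mat h P) * ?L * (map_mat h Q * W)) = d"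
      unfolding LK using assoc_mult_mat_outer[OF V hP(1) L hQ(1) W] by simp
    moreover have "V * map_mat h P \<in> carrier_mat k p" "map_mat h Q * W \<in> carrier_mat q k"
      using V W hP hQ by auto
    ultimately show ?thesis
      by blast
  qed
  moreover have "?L = (map_mat h P' * X) * (Y * map_mat h Q')"
    unfolding L_eq XY(3)
    using assoc_mult_mat[OF hP(2) X Y] assoc_mult_mat[OF mult_carrier_mat[OF hP(2) X] Y hQ(2)] by simp
  moreover have "map_mat h P' * X \<in> carrier_mat p k" "Y * map_mat h Q' \<in> carrier_mat k q"
    using X Y hP hQ by auto
  ultimately show ?thesis
    using A0 by (intro pencil_rank_witnessI) auto
qed

lemma pencil_rank_witness_kcf:
  assumes h: "semiring_hom h" and A: "is_pencil p q A" and R: "is_pencil n n R"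
    and P: "P \<in> carrier_mat p p" "invertible_mat P" and Q: "Q \<in> carrier_mat q q" "invertible_mat Q"
    and K: "(P * fst A * Q, P * snd A * Q) = foldr diag_pencil (map L_block c @ map LT_block u) R"
  shows "pencil_rank_witness a b h A (sum_list c + sum_list u + n)
    (a ^ (sum_list c + sum_list u) * det (pencil_mat a b h R))
    (b ^ (sum_list c + sum_list u) * det (pencil_mat a b h R))"
proof (rule pencil_rank_witness_strict_equiv[OF h A P Q])
  interpret h: semiring_hom h by (rule h)
  have h0: "h 0 = 0"
    by simp
  note LT = pencil_rank_witness_foldr_diag_pencil[OF h0 pencil_rank_witness_LT_block[OF h]
      pencil_rank_witness_square[OF R], where ks = u]
  show "pencil_rank_witness a b h (P * fst A * Q, P * snd A * Q) (sum_list c + sum_list u + n)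
    (a ^ (sum_list c + sum_list u) * det (pencil_mat a b h R))
    (b ^ (sum_list c + sum_list u) * det (pencil_mat a b h R))"
    using pencil_rank_witness_foldr_diag_pencil[OF h0 pencil_rank_witness_L_block[OF h] LT, where ks = c]
    unfolding K by (simp add: power_add mult.assoc add.assoc)
qed

lemma pencil_rank_eq_if_witness:
  fixes A :: "'a::idom pencil"
  assumes W: "pencil_rank_witness 1 [:0, 1:] (\<lambda>x. [:x:]) A k da db" and da: "da \<noteq> 0"
  shows "pencil_rank A = k" and "k \<le> dim_row (fst A)"
proof -
  obtain r c X Y where A0: "fst A \<in> carrier_mat r c" "snd A \<in> carrier_mat r c"
    and XY: "X \<in> carrier_mat r k" "Y \<in> carrier_mat k c" "pencil_poly A = X * Y"
    and compress: "\<And>d. d \<in> {da, db} \<Longrightarrow> \<exists>V U. V \<in> carrier_mat k r \<and> U \<in> carrier_mat c k \<and>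
      det (V * pencil_poly A * U) = d"
    using W unfolding pencil_poly_eq_pencil_mat by (elim pencil_rank_witnessE) blast
  obtain V U where VU: "V \<in> carrier_mat k r" "U \<in> carrier_mat c k" "det (V * pencil_poly A * U) = da"
    using compress[of da] by blast
  have M: "pencil_poly A \<in> carrier_mat r c"
    using XY by simp
  define ranks where "ranks = {j. \<exists>m \<in> minors (pencil_poly A) j. m \<noteq> 0}"
  have k: "k \<in> ranks"
    unfolding ranks_def using nonzero_minor_if_det_mult_nonzero[OF M VU(1,2)] VU(3) da by simp
  have le: "j \<le> k" if "j \<in> ranks" for j
  proof (rule ccontr)
    assume "\<not> j \<le> k"
    then show False
      using that minor_eq_0_if_inner_dim_less[OF XY(1,2), of j] XY(3) unfolding ranks_def by auto
  qed
  then have "finite ranks"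
    by (meson finite_atMost finite_subset atMost_iff subsetI)
  then show "pencil_rank A = k"
    unfolding pencil_rank_def ranks_def[symmetric] using k le by (intro Max_eqI) auto
  show "k \<le> dim_row (fst A)"
  proof (rule ccontr)
    assume "\<not> k \<le> dim_row (fst A)"
    then show False
      using k minors_eq_empty[OF M, of k] A0(1) unfolding ranks_def by auto
  qed
qed

lemma det_divisor_hom_pencil_if_witness:
  fixes A :: "'a::field_gcd pencil"
  assumes W: "pencil_rank_witness [:0, 1:] [:[:0, 1:]:] (\<lambda>x. [:[:x:]:]) A k
      ([:0, 1:] ^ N * d) ([:[:0, 1:]:] ^ N * d)"
    and d: "d \<noteq> 0"
  shows "det_divisor (hom_pencil A) k dvd d" and "det_divisor (hom_pencil A) k \<noteq> 0"
proof -
  let ?t = "[:0, 1:] :: 'a poly poly" and ?s = "[:[:0, 1:]:] :: 'a poly poly"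
  let ?D = "det_divisor (hom_pencil A) k"
  obtain r c X Y where A0: "fst A \<in> carrier_mat r c" "snd A \<in> carrier_mat r c"
    and "X \<in> carrier_mat r k" "Y \<in> carrier_mat k c" "hom_pencil A = X * Y"
    and compress: "\<And>e. e \<in> {?t ^ N * d, ?s ^ N * d} \<Longrightarrow>
      \<exists>V W. V \<in> carrier_mat k r \<and> W \<in> carrier_mat c k \<and> det (V * hom_pencil A * W) = e"
    using W unfolding hom_pencil_eq_pencil_mat by (elim pencil_rank_witnessE) blast
  have H: "hom_pencil A \<in> carrier_mat r c"
    unfolding hom_pencil_eq_pencil_mat by (rule pencil_mat_carrier[OF A0(1)])
  have "?D dvd e" if "e \<in> {?t ^ N * d, ?s ^ N * d}" for e
    using compress[OF that] det_divisor_dvd_det_mult[OF H] by blast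
  then have "?D dvd gcd (d * ?t ^ N) (d * ?s ^ N)"
    by (simp add: mult.commute)
  also have "gcd (d * ?t ^ N) (d * ?s ^ N) = normalize d"
    using coprime_t_s[where 'a = 'a] by (simp add: gcd_mult_left)
  finally show "?D dvd d"
    by simp
  then show "?D \<noteq> 0"
    using d by auto
qed

lemma det_hom_pencil_neq_0:
  assumes "det (pencil_poly R) \<noteq> 0"
  shows "det (hom_pencil (R :: 'a::comm_ring_1 pencil)) \<noteq> 0"
proof -
  have hom: "comm_ring_hom (\<lambda>f :: 'a poly poly. poly f 1)"
    by unfold_locales simp_all
  have "pencil_poly R = map_mat (\<lambda>f. poly f 1) (hom_pencil R)"
    by (rule eq_matI) (simp_all add: pencil_poly_def hom_pencil_def)
  then show ?thesis
    using assms by (auto simp: comm_ring_hom.hom_det[OF hom])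
qed

lemma tdeg_det_hom_pencil_le:
  assumes R: "is_pencil n n R"
  shows "tdeg (det (hom_pencil R)) \<le> n"
proof (rule tdeg_det_le)
  show "hom_pencil R \<in> carrier_mat n n"
    using R by (auto simp: is_pencil_def hom_pencil_def)
  fix i j assume "i < n" "j < n"
  then have "hom_pencil R $$ (i, j) = [:[:0, snd R $$ (i, j):], [:fst R $$ (i, j):]:]"
    using R by (auto simp: is_pencil_def hom_pencil_def)
  then show "tdeg (hom_pencil R $$ (i, j)) \<le> 1"
    by (intro tdeg_le) (auto simp: coeff_pCons degree_pCons_le split: nat.splits)
qed

lemma kcf_rank_and_det_divisor:
  fixes A :: "'a::field_gcd pencil"
  assumes A: "is_pencil p q A" and kcf: "kcf_minimal_indices p q A c u"
  obtains n where "pencil_rank A = sum_list c + sum_list u + n" and "pencil_rank A \<le> p"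
    and "det_divisor (hom_pencil A) (pencil_rank A) \<noteq> 0"
    and "tdeg (det_divisor (hom_pencil A) (pencil_rank A)) \<le> n"
proof -
  obtain P Q R where P: "P \<in> carrier_mat p p" "invertible_mat P"
    and Q: "Q \<in> carrier_mat q q" "invertible_mat Q" and "regular_pencil R"
    and K: "(P * fst A * Q, P * snd A * Q) = foldr diag_pencil (map L_block c @ map LT_block u) R"
    using kcf unfolding kcf_minimal_indices_def by blast
  then obtain n where R: "is_pencil n n R" and dR: "det (pencil_poly R) \<noteq> 0"
    unfolding regular_pencil_def by blast
  define N where "N = sum_list c + sum_list u"
  have "pencil_rank_witness 1 [:0, 1:] (\<lambda>x. [:x:]) A (N + n) (1 ^ N * det (pencil_poly R))
      ([:0, 1:] ^ N * det (pencil_poly R))"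
    unfolding N_def pencil_poly_eq_pencil_mat
    by (rule pencil_rank_witness_kcf[OF semiring_hom_const_poly A R P Q K])
  then have rank: "pencil_rank A = N + n" and "N + n \<le> p"
    using pencil_rank_eq_if_witness[of A] dR A by (auto simp: is_pencil_def)
  have dH: "det (hom_pencil R) \<noteq> 0"
    by (rule det_hom_pencil_neq_0[OF dR])
  have "pencil_rank_witness [:0, 1:] [:[:0, 1:]:] (\<lambda>x. [:[:x:]:]) A (N + n)
      ([:0, 1:] ^ N * det (hom_pencil R)) ([:[:0, 1:]:] ^ N * det (hom_pencil R))"
    unfolding N_def hom_pencil_eq_pencil_mat
    by (rule pencil_rank_witness_kcf[OF semiring_hom_const_poly_poly A R P Q K])
  note D = det_divisor_hom_pencil_if_witness[OF this dH]
  have "tdeg (det_divisor (hom_pencil A) (N + n)) \<le> tdeg (det (hom_pencil R))"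
    by (rule tdeg_dvd_le[OF D(1) dH])
  also have "\<dots> \<le> n"
    by (rule tdeg_det_hom_pencil_le[OF R])
  finally show ?thesis
    using that rank \<open>N + n \<le> p\<close> D(2) unfolding N_def by simp
qed

lemma hom_inv_factor_neq_0:
  assumes "det_divisor (hom_pencil A) (pencil_rank A) \<noteq> 0" and "1 \<le> k" and "k \<le> pencil_rank A"
  shows "hom_inv_factor A k \<noteq> 0"
proof -
  let ?D = "det_divisor (hom_pencil A)"
  have "?D k \<noteq> 0"
    using assms(1) det_divisor_mono[OF assms(3), of "hom_pencil A"] by auto
  moreover have "?D k = hom_inv_factor A k * ?D (k - 1)"
    using det_divisor_dvd_Suc[of "hom_pencil A" "k - 1"] assms(2,3) by (simp add: hom_inv_factor_def)
  ultimately show ?thesis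
    by auto
qed

lemma sum_tdeg_hom_inv_factor:
  fixes A :: "'a::field_gcd pencil"
  assumes "det_divisor (hom_pencil A) (pencil_rank A) \<noteq> 0" and "k \<le> pencil_rank A"
  shows "(\<Sum>i = 1..k. tdeg (hom_inv_factor A i)) = tdeg (det_divisor (hom_pencil A) k)"
  using assms(2)
proof (induction k)
  case (Suc k)
  let ?D = "det_divisor (hom_pencil A)"
  have "?D (Suc k) = hom_inv_factor A (Suc k) * ?D k"
    using det_divisor_dvd_Suc[of "hom_pencil A" k] Suc.prems by (simp add: hom_inv_factor_def)
  moreover have "?D k \<noteq> 0"
    using assms(1) det_divisor_mono[of k "pencil_rank A" "hom_pencil A"] Suc.prems by auto
  ultimately have "tdeg (?D (Suc k)) = tdeg (hom_inv_factor A (Suc k)) + tdeg (?D k)"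
    using hom_inv_factor_neq_0[OF assms(1), of "Suc k"] Suc.prems by (simp add: tdeg_mult)
  then show ?case
    using Suc by simp
qed simp

lemma kcf_degree_budget:
  fixes A :: "'a::field_gcd pencil"
  assumes "is_pencil p q A" and "kcf_minimal_indices p q A c u"
  shows "sum_list c + sum_list u + (\<Sum>i = 1..pencil_rank A. tdeg (hom_inv_factor A i)) \<le> pencil_rank A"
    and "pencil_rank A \<le> p"
    and "\<And>k. 1 \<le> k \<Longrightarrow> k \<le> pencil_rank A \<Longrightarrow> hom_inv_factor A k \<noteq> 0"
proof -
  obtain n where rank: "pencil_rank A = sum_list c + sum_list u + n" and "pencil_rank A \<le> p"
    and D: "det_divisor (hom_pencil A) (pencil_rank A) \<noteq> 0"
    and "tdeg (det_divisor (hom_pencil A) (pencil_rank A)) \<le> n"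
    using kcf_rank_and_det_divisor[OF assms] .
  moreover have "(\<Sum>i = 1..pencil_rank A. tdeg (hom_inv_factor A i)) = tdeg (det_divisor (hom_pencil A) (pencil_rank A))"
    by (rule sum_tdeg_hom_inv_factor[OF D order_refl])
  ultimately show "sum_list c + sum_list u + (\<Sum>i = 1..pencil_rank A. tdeg (hom_inv_factor A i)) \<le> pencil_rank A"
    and "pencil_rank A \<le> p"
    by linarith+
  show "\<And>k. 1 \<le> k \<Longrightarrow> k \<le> pencil_rank A \<Longrightarrow> hom_inv_factor A k \<noteq> 0"
    by (rule hom_inv_factor_neq_0[OF D])
qed

lemma gcd_defect_lower_bound:
  fixes A :: "'a::field_gcd pencil" and g :: "nat \<Rightarrow> 'a poly poly"
  assumes "is_pencil p q A" and "kcf_minimal_indices p q A c u"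
  defines "\<rho> \<equiv> pencil_rank A" and "\<phi> \<equiv> hom_inv_factor A"
  shows "int (sum_list c) + of_bool (\<not> (\<forall>j. 1 \<le> j \<and> j \<le> \<rho> \<longrightarrow> \<phi> j dvd g j))
    \<le> int \<rho> - (\<Sum>i = 1..\<rho> - 1. int (tdeg (gcd (\<phi> (i + 1)) (g (i + 1))))) - (\<Sum>i = 1..\<rho>. int (conj_part u i))"
proof -
  note budget = kcf_degree_budget[OF assms(1,2), folded \<rho>_def \<phi>_def]
  define D where "D \<longleftrightarrow> (\<forall>j. 1 \<le> j \<and> j \<le> \<rho> \<longrightarrow> \<phi> j dvd g j)"
  have "(\<Sum>i = 1..\<rho> - 1. tdeg (gcd (\<phi> (i + 1)) (g (i + 1)))) + of_bool (\<not> D) \<le> (\<Sum>i = 1..\<rho>. tdeg (\<phi> i))"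
    unfolding D_def by (rule sum_tdeg_gcd_le[OF budget(3)])
  moreover have "(\<Sum>i = 1..\<rho>. conj_part u i) \<le> sum_list u"
    by (rule sum_conj_part_le)
  ultimately have "sum_list c + of_bool (\<not> D) + (\<Sum>i = 1..\<rho> - 1. tdeg (gcd (\<phi> (i + 1)) (g (i + 1))))
      + (\<Sum>i = 1..\<rho>. conj_part u i) \<le> \<rho>"
    using budget(1) by linarith
  then have "int (sum_list c + of_bool (\<not> D) + (\<Sum>i = 1..\<rho> - 1. tdeg (gcd (\<phi> (i + 1)) (g (i + 1))))
      + (\<Sum>i = 1..\<rho>. conj_part u i)) \<le> int \<rho>"
    by (simp only: of_nat_le_iff)
  then show ?thesis
    unfolding D_def[symmetric] of_nat_add of_nat_of_bool of_nat_sum by linarith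
qed

theorem lemma5p1:
  fixes A B :: "'a::{alg_closed_field,field_gcd} pencil"
    and p q :: nat and c d u v :: "nat list"
  assumes pA: "is_pencil p q A" and pB: "is_pencil p q B"
    and kA: "kcf_minimal_indices p q A c u"
    and kB: "kcf_minimal_indices p q B d v"
  defines "\<rho>1 \<equiv> pencil_rank A" and "\<rho>2 \<equiv> pencil_rank B"
  defines "\<rho> \<equiv> min \<rho>1 \<rho>2"
  defines "\<phi> \<equiv> hom_inv_factor A" and "\<psi> \<equiv> hom_inv_factor B"
  defines "r \<equiv> (\<lambda>i. if i = 0 then q - \<rho>1 else conj_part c i)"
    and "s \<equiv> (\<lambda>i. if i = 0 then q - \<rho>2 else conj_part d i)"
    and "r' \<equiv> (\<lambda>i. if i = 0 then p - \<rho>1 else conj_part u i)"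
    and "s' \<equiv> (\<lambda>i. if i = 0 then p - \<rho>2 else conj_part v i)"
  defines "x \<equiv> (LEAST i. r i \<noteq> s i)"
  defines "e \<equiv> int (LEAST j. x \<le> j \<and> r j \<le> s j) - 1"
    and "e' \<equiv> int (LEAST j. x \<le> j \<and> s j \<le> r j) - 1"
  defines "G \<equiv> int \<rho> - 1 - (\<Sum>i = 1..\<rho> - 1. int (tdeg (gcd (\<phi> (i+1)) (\<psi> (i+1)))))
                 - (\<Sum>i = 1..\<rho>. int (r' i))"
  defines "D\<phi> \<equiv> (\<forall>j. 1 \<le> j \<and> j \<le> \<rho> \<longrightarrow> \<phi> j dvd \<psi> j)"
    and "D\<psi> \<equiv> (\<forall>j. 1 \<le> j \<and> j \<le> \<rho> \<longrightarrow> \<psi> j dvd \<phi> j)"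
  assumes rs: "r \<noteq> s" and rs': "r' = s'"
    and G: "G \<le> (\<Sum>i = 1..\<rho>. int (min (r i) (s i))) + max e e'"
  shows "(e > e' \<longrightarrow>
            (\<forall>i::nat. x \<le> i \<and> int i \<le> e \<longrightarrow>
               - int x - 1 \<le> int (s i) - int (r i) \<and> int (s i) - int (r i) \<le> -1 \<and>
               (int (s i) - int (r i) = - int x - 1 \<longrightarrow> D\<phi>)) \<and>
            (\<forall>i::nat. int i > e \<longrightarrow>
               - int x \<le> int (s i) - int (r i) \<and> int (s i) - int (r i) \<le> e + 1 \<and>
               (int (s i) - int (r i) = e + 1 \<longrightarrow> D\<psi>)))
       \<and> (e' > e \<longrightarrow>
            (\<forall>i::nat. x \<le> i \<and> int i \<le> e' \<longrightarrow>
               - int x - 1 \<le> int (r i) - int (s i) \<and> int (r i) - int (s i) \<le> -1 \<and>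
               (int (r i) - int (s i) = - int x - 1 \<longrightarrow> D\<psi>)) \<and>
            (\<forall>i::nat. int i > e' \<longrightarrow>
               - int x \<le> int (r i) - int (s i) \<and> int (r i) - int (s i) \<le> e' + 1 \<and>
               (int (r i) - int (s i) = e' + 1 \<longrightarrow> D\<phi>)))"
proof -
  note budget_A = kcf_degree_budget[OF pA kA, folded \<rho>1_def]
  note budget_B = kcf_degree_budget[OF pB kB, folded \<rho>2_def]
  have "\<rho>1 = \<rho>2"
    using fun_cong[OF rs', of 0] budget_A(2) budget_B(2) unfolding r'_def s'_def by simp
  then have \<rho>: "\<rho>1 = \<rho>" "\<rho>2 = \<rho>"
    unfolding \<rho>_def by simp_all
  have sum_r': "(\<Sum>i = 1..\<rho>. int (r' i)) = (\<Sum>i = 1..\<rho>. int (conj_part u i))"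
    unfolding r'_def by (rule sum.cong) auto
  have sum_s': "(\<Sum>i = 1..\<rho>. int (r' i)) = (\<Sum>i = 1..\<rho>. int (conj_part v i))"
    unfolding rs' s'_def by (rule sum.cong) auto
  have c: "sum_list c \<le> \<rho>" and d: "sum_list d \<le> \<rho>"
    using budget_A(1) budget_B(1) \<rho> by simp_all
  have "\<forall>i > 0. r i = conj_part c i" "\<forall>i > 0. s i = conj_part d i"
    unfolding r_def s_def by simp_all
  note r = sum_conj_part_shifted[OF c this(1)] and s = sum_conj_part_shifted[OF d this(2)]
  have "int (\<Sum>i = 1..\<rho>. r i) - 1 + of_bool (\<not> D\<phi>) \<le> G"
    using gcd_defect_lower_bound[OF pA kA, of \<psi>] \<rho> r(1)
    unfolding G_def D\<phi>_def sum_r' \<phi>_def \<rho>1_def by simp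
  moreover have "int (\<Sum>i = 1..\<rho>. s i) - 1 + of_bool (\<not> D\<psi>) \<le> G"
    using gcd_defect_lower_bound[OF pB kB, of \<phi>] \<rho> s(1)
    unfolding G_def D\<psi>_def sum_s' \<psi>_def \<rho>2_def by (simp add: gcd.commute)
  moreover have "r 0 = s 0"
    unfolding r_def s_def using \<rho> by simp
  moreover have "r x \<noteq> s x"
    using rs LeastI_ex[of "\<lambda>i. r i \<noteq> s i"] unfolding x_def by auto
  ultimately show ?thesis
    using first_difference_bounds[OF r(2) s(2), where x = x, folded e_def e'_def, OF _ _ G]
    unfolding D\<phi>_def D\<psi>_def by blast
qed

end
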